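(* For all $n\in\mathbb{N}$ and $k\in[n+2]$, $$N_{n+1,k}=\sum_{m=0}^n\ \sum_{l=L_1(k,m)}^{L_2(k,m)}\binom{k-1}{l}\binom{n+2-k}{m+1-l}\Big[\delta_{l,0}N_{m,1}+\sum_{r=1}^{l}N_{m,r}\Big]N_{n-m,k-l},$$ where $L_1(k,m)=\max(0,m+k-n-1)$, $L_2(k,m)=\min(k-1,m+1)$ and $\delta_{l,0}$ is the Kronecker delta. In particular $N_{n,n+1}=|\mathcal{OV}^2(2n)|$.
   Context: $I_{r}$ denotes, for a totally ordered set $I$, the set of $r$-tuples $(i_1,\dots,i_r)$ with $i_1>\dots>i_m<\dots<i_r$ for some $m\in[r]$ (strict inequalities). For a non-crossing partition $\pi$ and blocks $B,B'$, write $B'<B$ if there are two consecutive elements $p<p'$ of $B'$ with $p<k<p'$ for all $k\in B$; $B'$ is the nearest outer block of $B$ if $B'<B$ and no $B''$ satisfies $B'<B''<B$. A labeling $\mathfrak i$ of the blocks by elements of a totally ordered set is V-monotone if for every sequence of blocks $B_1,\dots,B_r$ with $B_{k+1}$ the nearest outer block of $B_k$, $(\mathfrak i(B_1),\dots,\mathfrak i(B_r))\in I_r$. $\mathcal{OV}^2(2n)$ is the set of pairs $(\pi,\mathfrak i)$ with $\pi$ a non-crossing pair partition of $[2n]$ and $\mathfrak i:\pi\to[n]$ a bijective V-monotone labeling; $\mathcal{OV}^2(0)=\{\emptyset\}$. For $n\ge0$ and $k\in[n+1]$, $\mathcal{OV}^2_k(2n)$ is the set of $(\pi,\mathfrak i)\in\mathcal{OV}^2(2n)$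 such that the labeled partition of $\{0,1,\dots,2n+1\}$ obtained by adding the block $\{0,2n+1\}$ with label $k-\tfrac12$ (labels taken in $\mathbb{Q}$ with the usual order) is still V-monotonically labeled. $N_{n,k}=|\mathcal{OV}^2_k(2n)|$, with $N_{0,1}=1$. *)

theory Defs
  imports Complex_Main
begin

definition in_I :: "'a::linorder list \<Rightarrow> bool" where
  "in_I xs \<longleftrightarrow> (\<exists>m < length xs.
      (\<forall>i. i < m \<longrightarrow> xs ! i > xs ! (Suc i)) \<and>
      (\<forall>i. m \<le> i \<and> Suc i < length xs \<longrightarrow> xs ! i < xs ! (Suc i)))"

definition pair_partition :: "nat set set \<Rightarrow> nat set \<Rightarrow> bool" where
  "pair_partition \<pi> S \<longleftrightarrow>
     (\<forall>B\<in>\<pi>. card B = 2) \<and> \<Union>\<pi> = S \<and>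
     (\<forall>B\<in>\<pi>. \<forall>B'\<in>\<pi>. B \<noteq> B' \<longrightarrow> B \<inter> B' = {})"

definition noncrossing :: "nat set set \<Rightarrow> bool" where
  "noncrossing \<pi> \<longleftrightarrow> (\<forall>B\<in>\<pi>. \<forall>B'\<in>\<pi>. B \<noteq> B' \<longrightarrow>
     \<not> (\<exists>a b c d. a < b \<and> b < c \<and> c < d \<and> a \<in> B \<and> c \<in> B \<and> b \<in> B' \<and> d \<in> B'))"

definition nc_pair_partition :: "nat set set \<Rightarrow> nat set \<Rightarrow> bool" where
  "nc_pair_partition \<pi> S \<longleftrightarrow> pair_partition \<pi> S \<and> noncrossing \<pi>"

definition outer :: "nat set \<Rightarrow> nat set \<Rightarrow> bool" where
  "outer B' B \<longleftrightarrow> (\<exists>p p'. p \<in> B' \<and> p' \<in> B' \<and> p < p' \<and>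
      (\<forall>q\<in>B'. \<not> (p < q \<and> q < p')) \<and> (\<forall>k\<in>B. p < k \<and> k < p'))"

definition nearest_outer :: "nat set set \<Rightarrow> nat set \<Rightarrow> nat set \<Rightarrow> bool" where
  "nearest_outer \<pi> B' B \<longleftrightarrow> outer B' B \<and> \<not> (\<exists>B''\<in>\<pi>. outer B' B'' \<and> outer B'' B)"

definition V_monotone :: "nat set set \<Rightarrow> (nat set \<Rightarrow> 'a::linorder) \<Rightarrow> bool" where
  "V_monotone \<pi> lab \<longleftrightarrow> (\<forall>bs. bs \<noteq> [] \<and> set bs \<subseteq> \<pi> \<and>
      (\<forall>i. Suc i < length bs \<longrightarrow> nearest_outer \<pi> (bs ! Suc i) (bs ! i))
      \<longrightarrow> in_I (map lab bs))"

text \<open>OV^2(2n): labelled partitions (\<pi>, lab), lab a bijection \<pi> \<rightarrow> {1..n};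
  lab is normalised to 0 outside \<pi> so that each labelled partition is counted once.\<close>
definition OV2 :: "nat \<Rightarrow> (nat set set \<times> (nat set \<Rightarrow> nat)) set" where
  "OV2 n = {(\<pi>, lab). nc_pair_partition \<pi> {1..2*n} \<and> bij_betw lab \<pi> {1..n} \<and>
      (\<forall>B. B \<notin> \<pi> \<longrightarrow> lab B = 0) \<and> V_monotone \<pi> lab}"

definition ext_part :: "nat \<Rightarrow> nat set set \<Rightarrow> nat set set" where
  "ext_part n \<pi> = insert {0, 2*n+1} \<pi>"

definition ext_lab :: "nat \<Rightarrow> nat \<Rightarrow> (nat set \<Rightarrow> nat) \<Rightarrow> nat set \<Rightarrow> rat" where
  "ext_lab n k lab B = (if B = {0, 2*n+1} then of_nat k - 1/2 else of_nat (lab B))"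

definition OV2k :: "nat \<Rightarrow> nat \<Rightarrow> (nat set set \<times> (nat set \<Rightarrow> nat)) set" where
  "OV2k n k = {(\<pi>, lab) \<in> OV2 n. V_monotone (ext_part n \<pi>) (ext_lab n k lab)}"

definition N :: "nat \<Rightarrow> nat \<Rightarrow> nat" where
  "N n k = card (OV2k n k)"

end

theory Submission
  imports Defs
begin

text \<open>Membership in \<open>I_r\<close> is a local condition (neighbours differ, no interior peak), so
  V-monotonicity only constrains pairs and triples of successively nearest outer blocks.
  Count more generally the V-monotone labellings of non-crossing pair partitions by an arbitrary
  ordered label set \<open>L\<close> below an imaginary enclosing block labelled \<open>t\<close>; for \<open>L = {1..n}\<close> and
  \<open>t = k - 1/2\<close> this is \<open>N n k\<close>. Cutting at the block \<open>{1, 2m+2}\<close> through the first point splits a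
  partition into the \<open>m\<close> pairs nested in it, which now lie below the label \<open>x\<close> of the first block,
  and the pairs to its right, which still lie below \<open>t\<close>. Gluing is compatible with V-monotonicity
  exactly when \<open>x \<noteq> t\<close> and, if \<open>x > t\<close>, \<open>x\<close> is the least label of the first block and its
  interior, because labels above the enclosing one keep increasing inwards. By induction the count
  depends only on \<open>|L|\<close> and on the rank of \<open>t\<close> in \<open>L\<close>; sorting the label sets of the two parts by
  how many of their labels lie below \<open>t\<close> produces the binomial coefficients, and the admissible
  \<open>x\<close> contribute \<open>N m 1 + \<dots> + N m l\<close>, or \<open>N m 1\<close> when \<open>l = 0\<close>.\<close>

section \<open>V-monotonicity as a local condition\<close>

lemma in_I_imp_no_peak:
  fixes xs :: "'a::linorder list"
  assumes "in_I xs"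
  shows "xs \<noteq> []" "\<And>i. Suc i < length xs \<Longrightarrow> xs!i \<noteq> xs!Suc i"
    "\<And>i. Suc (Suc i) < length xs \<Longrightarrow> \<not> (xs!i < xs!Suc i \<and> xs!Suc (Suc i) < xs!Suc i)"
proof -
  obtain m where m: "m < length xs" and dec: "\<forall>i. i < m \<longrightarrow> xs ! i > xs ! (Suc i)"
    and inc: "\<forall>i. m \<le> i \<and> Suc i < length xs \<longrightarrow> xs ! i < xs ! (Suc i)"
    using assms unfolding in_I_def by blast
  show "xs \<noteq> []" using m by auto
  show "xs!i \<noteq> xs!Suc i" if "Suc i < length xs" for i
    using that dec inc by (metis linorder_not_le order_less_irrefl)
  show "\<not> (xs!i < xs!Suc i \<and> xs!Suc (Suc i) < xs!Suc i)" if i: "Suc (Suc i) < length xs" for i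
  proof
    assume peak: "xs!i < xs!Suc i \<and> xs!Suc (Suc i) < xs!Suc i"
    then have "m \<le> i" using dec by (meson leI not_less_iff_gr_or_eq)
    then show False using inc i peak by (meson Suc_leD Suc_lessD order.asym not_less_eq_eq)
  qed
qed

lemma in_I_if_no_peak:
  fixes xs :: "'a::linorder list"
  assumes "xs \<noteq> []" and distinct: "\<And>i. Suc i < length xs \<Longrightarrow> xs!i \<noteq> xs!Suc i"
    and no_peak: "\<And>i. Suc (Suc i) < length xs \<Longrightarrow> \<not> (xs!i < xs!Suc i \<and> xs!Suc (Suc i) < xs!Suc i)"
  shows "in_I xs"
proof -
  \<comment> \<open>the turning point is the first ascent, or the last position if there is none\<close>
  define m where "m = (LEAST i. Suc i = length xs \<or> xs!i < xs!Suc i)"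
  have ex: "Suc (length xs - 1) = length xs" using assms(1) by auto
  have m_stop: "Suc m = length xs \<or> xs!m < xs!Suc m"
    unfolding m_def by (rule LeastI) (use ex in blast)
  have m_lt: "m < length xs"
    using Least_le[of "\<lambda>i. Suc i = length xs \<or> xs!i < xs!Suc i" "length xs - 1"] ex
    unfolding m_def[symmetric] by linarith
  have dec: "xs ! i > xs ! (Suc i)" if "i < m" for i
  proof -
    have "\<not> (Suc i = length xs \<or> xs!i < xs!Suc i)" using that unfolding m_def by (rule not_less_Least)
    then show ?thesis using distinct[of i] that m_lt by (meson Suc_lessI less_trans_Suc linorder_neqE)
  qed
  have inc: "xs ! i < xs ! (Suc i)" if "m \<le> i" "Suc i < length xs" for i
    using that
  proof (induction i)
    case 0 then show ?case using m_stop by auto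
  next
    case (Suc i)
    show ?case
    proof (cases "m = Suc i")
      case False
      then have "xs!i < xs!Suc i" using Suc by auto
      then show ?thesis using distinct no_peak Suc by (meson linorder_neqE)
    qed (use m_stop Suc in auto)
  qed
  show "in_I xs" unfolding in_I_def using m_lt dec inc by blast
qed

lemma in_I_iff_no_peak:
  fixes xs :: "'a::linorder list"
  shows "in_I xs \<longleftrightarrow> xs \<noteq> [] \<and> (\<forall>i. Suc i < length xs \<longrightarrow> xs!i \<noteq> xs!Suc i) \<and>
     (\<forall>i. Suc (Suc i) < length xs \<longrightarrow> \<not> (xs!i < xs!Suc i \<and> xs!Suc (Suc i) < xs!Suc i))"
  using in_I_imp_no_peak in_I_if_no_peak by metis

definition V_local :: "nat set set \<Rightarrow> (nat set \<Rightarrow> 'a::linorder) \<Rightarrow> bool" where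
  "V_local \<pi> lab \<longleftrightarrow> (\<forall>B\<in>\<pi>. \<forall>B'\<in>\<pi>. nearest_outer \<pi> B' B \<longrightarrow> lab B \<noteq> lab B') \<and>
     (\<forall>B\<in>\<pi>. \<forall>B'\<in>\<pi>. \<forall>B''\<in>\<pi>. nearest_outer \<pi> B' B \<and> nearest_outer \<pi> B'' B' \<longrightarrow>
        \<not> (lab B < lab B' \<and> lab B'' < lab B'))"

lemma V_monotone_iff_V_local: "V_monotone \<pi> lab \<longleftrightarrow> V_local \<pi> lab"
proof
  assume V: "V_monotone \<pi> lab"
  have chain: "in_I (map lab bs)"
    if "bs \<noteq> []" "set bs \<subseteq> \<pi>" "\<forall>i. Suc i < length bs \<longrightarrow> nearest_outer \<pi> (bs ! Suc i) (bs ! i)" for bs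
    using V that unfolding V_monotone_def by blast
  have "lab B \<noteq> lab B'" if "B\<in>\<pi>" "B'\<in>\<pi>" "nearest_outer \<pi> B' B" for B B'
    using chain[of "[B, B']"] that by (simp add: in_I_iff_no_peak less_Suc_eq)
  moreover have "\<not> (lab B < lab B' \<and> lab B'' < lab B')"
    if "B\<in>\<pi>" "B'\<in>\<pi>" "B''\<in>\<pi>" "nearest_outer \<pi> B' B" "nearest_outer \<pi> B'' B'" for B B' B''
    using chain[of "[B, B', B'']"] that by (simp add: in_I_iff_no_peak less_Suc_eq)
  ultimately show "V_local \<pi> lab" unfolding V_local_def by blast
next
  assume "V_local \<pi> lab"
  then show "V_monotone \<pi> lab"
    unfolding V_monotone_def V_local_def in_I_iff_no_peak
    by (auto simp: subset_code(1)) (metis Suc_lessD nth_mem)+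
qed

lemma V_local_comp_strict_mono:
  assumes "strict_mono f"
  shows "V_local \<pi> (\<lambda>B. f (lab B)) \<longleftrightarrow> V_local \<pi> lab"
  unfolding V_local_def using strict_mono_less[OF assms] strict_mono_eq[OF assms] by simp

lemma strict_mono_of_nat: "strict_mono (of_nat :: nat \<Rightarrow> 'a::linordered_semidom)"
  by (rule strict_monoI) simp

lemma outer_doubleton_iff: "u < v \<Longrightarrow> outer {u, v} B \<longleftrightarrow> (\<forall>k\<in>B. u < k \<and> k < v)"
  unfolding outer_def by (rule iffI) (fastforce, (intro exI[of _ u] exI[of _ v]; auto))

lemma outer_irrefl: "\<not> outer X X"
  unfolding outer_def by blast

lemma outer_trans: "outer X Y \<Longrightarrow> outer Y Z \<Longrightarrow> outer X Z"
  unfolding outer_def by (metis order.strict_trans)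

lemma outer_bounds: "outer X B \<Longrightarrow> \<exists>p\<in>X. \<exists>p'\<in>X. \<forall>k\<in>B. p < k \<and> k < p'"
  unfolding outer_def by blast

definition root_block :: "nat set set \<Rightarrow> nat set \<Rightarrow> bool" where
  "root_block \<pi> B \<longleftrightarrow> \<not> (\<exists>B'\<in>\<pi>. outer B' B)"

text \<open>\<open>t\<close> is the label of an imaginary block enclosing all of \<open>\<pi>\<close>; see
  \<open>V_local_insert_outermost\<close>.\<close>
definition V_local_under :: "nat set set \<Rightarrow> (nat set \<Rightarrow> 'a::linorder) \<Rightarrow> 'a \<Rightarrow> bool" where
  "V_local_under \<pi> lab t \<longleftrightarrow> V_local \<pi> lab \<and> (\<forall>B\<in>\<pi>. root_block \<pi> B \<longrightarrow> lab B \<noteq> t) \<and>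
     (\<forall>B\<in>\<pi>. \<forall>B'\<in>\<pi>. nearest_outer \<pi> B' B \<and> root_block \<pi> B' \<longrightarrow> \<not> (lab B < lab B' \<and> t < lab B'))"

lemma V_local_under_cong:
  "(\<And>B. B \<in> \<pi> \<Longrightarrow> f B = g B) \<Longrightarrow> V_local_under \<pi> f t = V_local_under \<pi> g t"
  unfolding V_local_under_def V_local_def by simp

lemma V_local_insert_outermost:
  assumes "T \<notin> \<pi>" "\<And>B. B \<in> \<pi> \<Longrightarrow> outer T B" "\<And>B. B \<in> \<pi> \<Longrightarrow> \<not> outer B T"
  shows "V_local (insert T \<pi>) lab \<longleftrightarrow> V_local_under \<pi> lab (lab T)"
proof -
  have "nearest_outer (insert T \<pi>) X B \<longleftrightarrow> nearest_outer \<pi> X B" if "X \<in> \<pi>" "B \<in> \<pi>" for X B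
    using assms that unfolding nearest_outer_def by auto
  moreover have "nearest_outer (insert T \<pi>) T B \<longleftrightarrow> root_block \<pi> B" if "B \<in> \<pi>" for B
    using assms that outer_irrefl unfolding nearest_outer_def root_block_def by auto
  moreover have "\<not> nearest_outer (insert T \<pi>) X T" if "X \<in> insert T \<pi>" for X
    using assms that outer_irrefl unfolding nearest_outer_def by auto
  ultimately show ?thesis
    unfolding V_local_def V_local_under_def ball_simps by (auto 0 3)
qed

lemma nc_pair_partition_block: "nc_pair_partition \<pi> S \<Longrightarrow> B \<in> \<pi> \<Longrightarrow> B \<subseteq> S \<and> card B = 2"
  unfolding nc_pair_partition_def pair_partition_def by blast

section \<open>Counting below an enclosing label\<close>

text \<open>Generalisation of \<open>OV2k\<close>: the points are shifted by \<open>a\<close>, the labels range over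
  an arbitrary set \<open>L\<close> and \<open>t\<close> plays the role of the label \<open>k - 1/2\<close> of the added block.\<close>
definition OV_under :: "nat \<Rightarrow> nat \<Rightarrow> 'a::{linorder,zero} set \<Rightarrow> 'a \<Rightarrow>
    (nat set set \<times> (nat set \<Rightarrow> 'a)) set" where
  "OV_under a n L t = {(\<pi>, lab). nc_pair_partition \<pi> {a+1..a+2*n} \<and> bij_betw lab \<pi> L \<and>
      (\<forall>B. B \<notin> \<pi> \<longrightarrow> lab B = 0) \<and> V_local_under \<pi> lab t}"

lemma V_monotone_ext_iff:
  assumes "nc_pair_partition \<pi> {1..2*n}"
  shows "V_monotone (ext_part n \<pi>) (ext_lab n k lab) \<longleftrightarrow>
         V_local_under \<pi> (\<lambda>B. of_nat (lab B) :: rat) (of_nat k - 1/2)"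
proof -
  have sub: "B \<subseteq> {1..2*n}" if "B \<in> \<pi>" for B
    using nc_pair_partition_block[OF assms that] by blast
  have T: "{0, 2*n+1} \<notin> \<pi>" using sub by fastforce
  have "V_monotone (ext_part n \<pi>) (ext_lab n k lab) \<longleftrightarrow>
        V_local_under \<pi> (ext_lab n k lab) (ext_lab n k lab {0, 2*n+1})"
    unfolding V_monotone_iff_V_local ext_part_def
  proof (rule V_local_insert_outermost[OF T])
    show "outer {0, 2*n+1} B" if "B \<in> \<pi>" for B
      using sub[OF that] by (subst outer_doubleton_iff) auto
    show "\<not> outer B {0, 2*n+1}" if "B \<in> \<pi>" for B
      using sub[OF that] unfolding outer_def by fastforce
  qed
  also have "\<dots> \<longleftrightarrow> V_local_under \<pi> (\<lambda>B. of_nat (lab B) :: rat) (of_nat k - 1/2)"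
    using T by (auto intro!: V_local_under_cong simp: ext_lab_def)
  finally show ?thesis .
qed

lemma nat_label_of_rat_label:
  assumes bij: "bij_betw l \<pi> (of_nat ` A :: rat set)" and zero: "\<forall>B. B \<notin> \<pi> \<longrightarrow> l B = 0"
  obtains lab where "l = (\<lambda>B. of_nat (lab B))" and "bij_betw lab \<pi> A" and "\<forall>B. B \<notin> \<pi> \<longrightarrow> lab B = 0"
proof
  define lab where "lab B = nat \<lfloor>l B\<rfloor>" for B
  show l_eq: "l = (\<lambda>B. of_nat (lab B))"
  proof
    fix B show "l B = of_nat (lab B)"
    proof (cases "B \<in> \<pi>")
      case True
      then obtain i where "l B = of_nat i" using bij unfolding bij_betw_def by auto
      then show ?thesis unfolding lab_def by simp
    qed (simp add: zero lab_def)
  qed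
  have "inj_on lab \<pi>" using bij unfolding bij_betw_def inj_on_def l_eq by auto
  moreover have "of_nat ` (lab ` \<pi>) = (of_nat ` A :: rat set)"
    using bij unfolding bij_betw_def l_eq by (simp add: image_image)
  then have "lab ` \<pi> = A" by (metis inj_image_eq_iff inj_of_nat)
  ultimately show "bij_betw lab \<pi> A" unfolding bij_betw_def by simp
  show "\<forall>B. B \<notin> \<pi> \<longrightarrow> lab B = 0" using zero unfolding lab_def by simp
qed

lemma N_eq_card_OV_under:
  "N n k = card (OV_under 0 n (of_nat ` {1..n} :: rat set) (of_nat k - 1/2))"
proof -
  let ?L = "of_nat ` {1..n} :: rat set"
  let ?embed = "\<lambda>(\<pi>, lab :: nat set \<Rightarrow> nat). (\<pi>, \<lambda>B. of_nat (lab B) :: rat)"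
  have "inj_on ?embed (OV2k n k)"
    by (auto simp: inj_on_def fun_eq_iff)
  moreover have "?embed ` OV2k n k = OV_under 0 n ?L (of_nat k - 1/2)"
  proof (intro equalityI subsetI)
    fix z assume "z \<in> ?embed ` OV2k n k"
    then obtain \<pi> lab where z: "z = (\<pi>, \<lambda>B. of_nat (lab B))" and "(\<pi>, lab) \<in> OV2k n k" by auto
    then have nc: "nc_pair_partition \<pi> {1..2*n}" and "bij_betw lab \<pi> {1..n}"
      and "\<forall>B. B \<notin> \<pi> \<longrightarrow> lab B = 0" and "V_monotone (ext_part n \<pi>) (ext_lab n k lab)"
      unfolding OV2k_def OV2_def by auto
    moreover have "bij_betw (of_nat :: nat \<Rightarrow> rat) {1..n} ?L"
      by (simp add: bij_betw_imageI inj_on_def)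
    ultimately show "z \<in> OV_under 0 n ?L (of_nat k - 1/2)"
      unfolding z OV_under_def V_monotone_ext_iff[OF nc]
      using bij_betw_trans[of lab \<pi> "{1..n}" of_nat ?L] by (auto simp: o_def)
  next
    fix z assume "z \<in> OV_under 0 n ?L (of_nat k - 1/2)"
    then obtain \<pi> l where z: "z = (\<pi>, l)" and nc: "nc_pair_partition \<pi> {1..2*n}"
      and bij: "bij_betw l \<pi> ?L" and zero: "\<forall>B. B \<notin> \<pi> \<longrightarrow> l B = 0"
      and V: "V_local_under \<pi> l (of_nat k - 1/2)"
      unfolding OV_under_def by auto
    obtain lab where l_eq: "l = (\<lambda>B. of_nat (lab B))" and "bij_betw lab \<pi> {1..n}"
      and "\<forall>B. B \<notin> \<pi> \<longrightarrow> lab B = 0"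
      using nat_label_of_rat_label[OF bij zero] .
    moreover have "V_monotone \<pi> lab"
      using V unfolding l_eq V_monotone_iff_V_local V_local_under_def
      by (simp add: V_local_comp_strict_mono strict_mono_of_nat)
    ultimately have "(\<pi>, lab) \<in> OV2k n k"
      unfolding OV2k_def OV2_def using nc V_monotone_ext_iff[OF nc] V l_eq by auto
    then show "z \<in> ?embed ` OV2k n k" using z l_eq by (auto intro: image_eqI[where x="(\<pi>, lab)"])
  qed
  ultimately show ?thesis unfolding N_def by (metis card_image)
qed

lemma N_last_eq_card_OV2: "N n (n + 1) = card (OV2 n)"
proof -
  have "OV2 n \<subseteq> OV2k n (n + 1)"
  proof clarify
    fix \<pi> lab assume a: "(\<pi>, lab) \<in> OV2 n"
    then have nc: "nc_pair_partition \<pi> {1..2*n}" and b: "bij_betw lab \<pi> {1..n}"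
      and V: "V_monotone \<pi> lab"
      unfolding OV2_def by auto
    \<comment> \<open>all labels are below the label \<open>n + 1/2\<close> of the added block, so it imposes nothing\<close>
    have "(of_nat (lab B) :: rat) < of_nat (n + 1) - 1/2" if "B \<in> \<pi>" for B
    proof -
      have "lab B \<le> n" using b that unfolding bij_betw_def by auto
      then show ?thesis by simp
    qed
    then have "V_local_under \<pi> (\<lambda>B. of_nat (lab B) :: rat) (of_nat (n + 1) - 1/2)"
      using V unfolding V_local_under_def V_monotone_iff_V_local
      by (auto simp: V_local_comp_strict_mono strict_mono_of_nat) (metis order_less_irrefl, metis order.asym)
    then show "(\<pi>, lab) \<in> OV2k n (n + 1)"
      unfolding OV2k_def using a V_monotone_ext_iff[OF nc] by auto
  qed
  then have "OV2k n (n + 1) = OV2 n" unfolding OV2k_def by auto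
  then show ?thesis unfolding N_def by simp
qed

section \<open>Splitting at an enclosing block\<close>

locale enclosing_split =
  fixes B0 :: "nat set" and \<pi>1 \<pi>2 :: "nat set set"
  assumes encloses_inner: "\<And>B. B \<in> \<pi>1 \<Longrightarrow> outer B0 B"
    and first_outermost: "\<And>X. X \<in> \<pi>1 \<union> \<pi>2 \<Longrightarrow> \<not> outer X B0"
    and right_not_outer_inner: "\<And>X B. X \<in> \<pi>2 \<Longrightarrow> B \<in> \<pi>1 \<Longrightarrow> \<not> outer X B"
    and inner_not_outer_right: "\<And>X B. X \<in> \<pi>1 \<Longrightarrow> B \<in> \<pi>2 \<Longrightarrow> \<not> outer X B"
    and not_encloses_right: "\<And>B. B \<in> \<pi>2 \<Longrightarrow> \<not> outer B0 B"
begin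

lemma nearest_outer_insert:
  shows "X \<in> \<pi>1 \<Longrightarrow> B \<in> \<pi>1 \<Longrightarrow> nearest_outer (insert B0 (\<pi>1 \<union> \<pi>2)) X B \<longleftrightarrow> nearest_outer \<pi>1 X B"
    and "X \<in> \<pi>2 \<Longrightarrow> B \<in> \<pi>2 \<Longrightarrow> nearest_outer (insert B0 (\<pi>1 \<union> \<pi>2)) X B \<longleftrightarrow> nearest_outer \<pi>2 X B"
    and "B \<in> \<pi>1 \<Longrightarrow> nearest_outer (insert B0 (\<pi>1 \<union> \<pi>2)) B0 B \<longleftrightarrow> root_block \<pi>1 B"
    and "X \<in> insert B0 (\<pi>1 \<union> \<pi>2) \<Longrightarrow> \<not> nearest_outer (insert B0 (\<pi>1 \<union> \<pi>2)) X B0"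
    and "X \<in> \<pi>2 \<Longrightarrow> B \<in> \<pi>1 \<Longrightarrow> \<not> nearest_outer (insert B0 (\<pi>1 \<union> \<pi>2)) X B"
    and "X \<in> \<pi>1 \<Longrightarrow> B \<in> \<pi>2 \<Longrightarrow> \<not> nearest_outer (insert B0 (\<pi>1 \<union> \<pi>2)) X B"
    and "B \<in> \<pi>2 \<Longrightarrow> \<not> nearest_outer (insert B0 (\<pi>1 \<union> \<pi>2)) B0 B"
  using first_outermost inner_not_outer_right right_not_outer_inner not_encloses_right encloses_inner
    outer_irrefl
  unfolding nearest_outer_def root_block_def by auto

lemma root_block_insert:
  shows "root_block (insert B0 (\<pi>1 \<union> \<pi>2)) B0"
    and "B \<in> \<pi>1 \<Longrightarrow> \<not> root_block (insert B0 (\<pi>1 \<union> \<pi>2)) B"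
    and "B \<in> \<pi>2 \<Longrightarrow> root_block (insert B0 (\<pi>1 \<union> \<pi>2)) B \<longleftrightarrow> root_block \<pi>2 B"
  using first_outermost encloses_inner inner_not_outer_right not_encloses_right outer_irrefl
  unfolding root_block_def by auto

lemma V_local_under_insert_iff:
  fixes l :: "nat set \<Rightarrow> 'a::linorder"
  shows "V_local_under (insert B0 (\<pi>1 \<union> \<pi>2)) l t \<longleftrightarrow>
    V_local_under \<pi>1 l (l B0) \<and> V_local_under \<pi>2 l t \<and> l B0 \<noteq> t \<and>
    (\<forall>B\<in>\<pi>1. root_block \<pi>1 B \<longrightarrow> \<not> (l B < l B0 \<and> t < l B0))"
proof -
  let ?\<pi> = "insert B0 (\<pi>1 \<union> \<pi>2)"
  note facts = nearest_outer_insert root_block_insert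
  have c1: "(\<forall>B\<in>?\<pi>. \<forall>B'\<in>?\<pi>. nearest_outer ?\<pi> B' B \<longrightarrow> l B \<noteq> l B') \<longleftrightarrow>
     (\<forall>B\<in>\<pi>1. \<forall>B'\<in>\<pi>1. nearest_outer \<pi>1 B' B \<longrightarrow> l B \<noteq> l B') \<and>
     (\<forall>B\<in>\<pi>2. \<forall>B'\<in>\<pi>2. nearest_outer \<pi>2 B' B \<longrightarrow> l B \<noteq> l B') \<and>
     (\<forall>B\<in>\<pi>1. root_block \<pi>1 B \<longrightarrow> l B \<noteq> l B0)"
    unfolding ball_simps ball_Un by (simp add: facts cong: ball_cong) blast
  have c2: "(\<forall>B\<in>?\<pi>. root_block ?\<pi> B \<longrightarrow> l B \<noteq> t) \<longleftrightarrow>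
     l B0 \<noteq> t \<and> (\<forall>B\<in>\<pi>2. root_block \<pi>2 B \<longrightarrow> l B \<noteq> t)"
    unfolding ball_simps ball_Un by (simp add: facts cong: ball_cong)
  have c3: "(\<forall>B\<in>?\<pi>. \<forall>B'\<in>?\<pi>. \<forall>B''\<in>?\<pi>. nearest_outer ?\<pi> B' B \<and> nearest_outer ?\<pi> B'' B' \<longrightarrow>
        \<not> (l B < l B' \<and> l B'' < l B')) \<longleftrightarrow>
     (\<forall>B\<in>\<pi>1. \<forall>B'\<in>\<pi>1. \<forall>B''\<in>\<pi>1. nearest_outer \<pi>1 B' B \<and> nearest_outer \<pi>1 B'' B' \<longrightarrow>
        \<not> (l B < l B' \<and> l B'' < l B')) \<and>
     (\<forall>B\<in>\<pi>2. \<forall>B'\<in>\<pi>2. \<forall>B''\<in>\<pi>2. nearest_outer \<pi>2 B' B \<and> nearest_outer \<pi>2 B'' B' \<longrightarrow>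
        \<not> (l B < l B' \<and> l B'' < l B')) \<and>
     (\<forall>B\<in>\<pi>1. \<forall>B'\<in>\<pi>1. nearest_outer \<pi>1 B' B \<and> root_block \<pi>1 B' \<longrightarrow> \<not> (l B < l B' \<and> l B0 < l B'))"
    unfolding ball_simps ball_Un by (simp add: facts cong: ball_cong) blast
  have c4: "(\<forall>B\<in>?\<pi>. \<forall>B'\<in>?\<pi>. nearest_outer ?\<pi> B' B \<and> root_block ?\<pi> B' \<longrightarrow> \<not> (l B < l B' \<and> t < l B')) \<longleftrightarrow>
     (\<forall>B\<in>\<pi>1. root_block \<pi>1 B \<longrightarrow> \<not> (l B < l B0 \<and> t < l B0)) \<and>
     (\<forall>B\<in>\<pi>2. \<forall>B'\<in>\<pi>2. nearest_outer \<pi>2 B' B \<and> root_block \<pi>2 B' \<longrightarrow> \<not> (l B < l B' \<and> t < l B'))"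
    unfolding ball_simps ball_Un by (simp add: facts cong: ball_cong)
  show ?thesis
    unfolding V_local_under_def V_local_def c1 c2 c3 c4 by (intro iffI conjI; elim conjE; assumption)
qed

end

definition enclosing :: "nat set set \<Rightarrow> nat set \<Rightarrow> nat set set" where
  "enclosing \<pi> B = {X \<in> \<pi>. outer X B}"

lemma card_enclosing_less:
  assumes "finite \<pi>" "P \<in> \<pi>" "outer P B"
  shows "card (enclosing \<pi> P) < card (enclosing \<pi> B)"
proof (rule psubset_card_mono)
  show "finite (enclosing \<pi> B)" unfolding enclosing_def using assms by simp
  show "enclosing \<pi> P \<subset> enclosing \<pi> B"
    unfolding enclosing_def using assms outer_trans outer_irrefl by blast
qed

lemma nearest_outer_exists:
  assumes fin: "finite \<pi>" and "\<not> root_block \<pi> B"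
  obtains P where "P \<in> \<pi>" "nearest_outer \<pi> P B"
proof -
  let ?E = "enclosing \<pi> B" and ?depth = "\<lambda>X. card (enclosing \<pi> X)"
  have fin_E: "finite ?E" unfolding enclosing_def using fin by simp
  have "?E \<noteq> {}" using assms(2) unfolding root_block_def enclosing_def by auto
  then have "Max (?depth ` ?E) \<in> ?depth ` ?E" using fin_E by simp
  \<comment> \<open>the deepest block enclosing \<open>B\<close> is the nearest one\<close>
  then obtain P where P: "P \<in> ?E" "?depth P = Max (?depth ` ?E)" by auto
  have deepest: "?depth X \<le> ?depth P" if "X \<in> ?E" for X using P(2) fin_E that by simp
  have "P \<in> \<pi>" "outer P B" using P unfolding enclosing_def by auto
  moreover have "\<not> (\<exists>X\<in>\<pi>. outer P X \<and> outer X B)"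
  proof
    assume "\<exists>X\<in>\<pi>. outer P X \<and> outer X B"
    then obtain X where "outer P X" "X \<in> ?E" unfolding enclosing_def by blast
    then show False using deepest card_enclosing_less[OF fin \<open>P \<in> \<pi>\<close>] by (meson leD)
  qed
  ultimately show ?thesis using that unfolding nearest_outer_def by blast
qed

text \<open>Going inwards, a label sequence that has risen above the enclosing label \<open>x\<close> keeps
  increasing, since \<open>V_local\<close> forbids peaks.\<close>
lemma V_local_under_above_roots:
  fixes l :: "nat set \<Rightarrow> 'a::linorder"
  assumes fin: "finite \<pi>" and V: "V_local_under \<pi> l x"
    and roots: "\<And>B. B \<in> \<pi> \<Longrightarrow> root_block \<pi> B \<Longrightarrow> x < l B"
    and "B \<in> \<pi>"
  shows "x < l B"
proof -
  have distinct: "\<And>B B'. B \<in> \<pi> \<Longrightarrow> B' \<in> \<pi> \<Longrightarrow> nearest_outer \<pi> B' B \<Longrightarrow> l B \<noteq> l B'"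
    and no_peak: "\<And>B B' B''. B \<in> \<pi> \<Longrightarrow> B' \<in> \<pi> \<Longrightarrow> B'' \<in> \<pi> \<Longrightarrow> nearest_outer \<pi> B' B \<Longrightarrow>
       nearest_outer \<pi> B'' B' \<Longrightarrow> \<not> (l B < l B' \<and> l B'' < l B')"
    and no_peak_top: "\<And>B B'. B \<in> \<pi> \<Longrightarrow> B' \<in> \<pi> \<Longrightarrow> nearest_outer \<pi> B' B \<Longrightarrow>
       root_block \<pi> B' \<Longrightarrow> \<not> (l B < l B' \<and> x < l B')"
    using V unfolding V_local_under_def V_local_def by blast+
  have "x < l B \<and> (\<forall>P\<in>\<pi>. nearest_outer \<pi> P B \<longrightarrow> l P < l B)" if "B \<in> \<pi>" for B
    using that
  proof (induction "card (enclosing \<pi> B)" arbitrary: B rule: less_induct)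
    case less
    have IH: "x < l P \<and> (\<forall>P'\<in>\<pi>. nearest_outer \<pi> P' P \<longrightarrow> l P' < l P)"
      if "P \<in> \<pi>" "nearest_outer \<pi> P B" for P
      using less.hyps card_enclosing_less[OF fin] that unfolding nearest_outer_def by blast
    have parent_less: "l P < l B" if P: "P \<in> \<pi>" "nearest_outer \<pi> P B" for P
    proof (cases "root_block \<pi> P")
      case True
      then show ?thesis using no_peak_top[OF less.prems P] IH[OF P] distinct[OF less.prems P] by auto
    next
      case False
      then obtain P' where P': "P' \<in> \<pi>" "nearest_outer \<pi> P' P" using nearest_outer_exists[OF fin] by blast
      then have "l P' < l P" using IH[OF P] by blast
      then show ?thesis using no_peak[OF less.prems P(1) P'(1) P(2) P'(2)] distinct[OF less.prems P] by auto
    qed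
    show ?case
    proof (cases "root_block \<pi> B")
      case True
      then show ?thesis using roots less.prems unfolding root_block_def nearest_outer_def by blast
    next
      case False
      then obtain P where P: "P \<in> \<pi>" "nearest_outer \<pi> P B" using nearest_outer_exists[OF fin] by blast
      have "x < l P" using IH[OF P] by blast
      also have "l P < l B" using parent_less[OF P] .
      finally show ?thesis using parent_less by blast
    qed
  qed
  then show ?thesis using \<open>B \<in> \<pi>\<close> by blast
qed

section \<open>The first block of a non-crossing pair partition\<close>

definition crosses :: "nat set \<Rightarrow> nat set \<Rightarrow> bool" where
  "crosses B B' \<longleftrightarrow> (\<exists>a b c d. a < b \<and> b < c \<and> c < d \<and> a \<in> B \<and> c \<in> B \<and> b \<in> B' \<and> d \<in> B')"

lemma crossesI:
  "a < b \<Longrightarrow> b < c \<Longrightarrow> c < d \<Longrightarrow> a \<in> B \<Longrightarrow> c \<in> B \<Longrightarrow> b \<in> B' \<Longrightarrow> d \<in> B' \<Longrightarrow> crosses B B'"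
  unfolding crosses_def by blast

lemma noncrossing_iff_not_crosses:
  "noncrossing \<pi> \<longleftrightarrow> (\<forall>B\<in>\<pi>. \<forall>B'\<in>\<pi>. B \<noteq> B' \<longrightarrow> \<not> crosses B B')"
  unfolding noncrossing_def crosses_def ..

lemma not_crosses_if_less:
  assumes "\<And>x y. x \<in> X \<Longrightarrow> y \<in> Y \<Longrightarrow> x < y"
  shows "\<not> crosses X Y" "\<not> crosses Y X"
  unfolding crosses_def using assms by (meson order.asym)+

lemma not_crosses_if_nested:
  assumes "\<And>x. x \<in> X \<Longrightarrow> u < x \<and> x < v"
  shows "\<not> crosses X {u, v}" "\<not> crosses {u, v} X"
proof -
  show "\<not> crosses X {u, v}" unfolding crosses_def
  proof clarify
    fix a b c d assume "a < b" "b < c" "c < d" "a \<in> X" "c \<in> X" "b \<in> {u, v}" "d \<in> {u, v}"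
    then show False using assms[of a] assms[of c] by auto
  qed
  show "\<not> crosses {u, v} X" unfolding crosses_def
  proof clarify
    fix a b c d assume "a < b" "b < c" "c < d" "a \<in> {u, v}" "c \<in> {u, v}" "b \<in> X" "d \<in> X"
    then show False using assms[of b] assms[of d] by auto
  qed
qed

lemma noncrossing_subset: "noncrossing \<pi> \<Longrightarrow> \<pi>' \<subseteq> \<pi> \<Longrightarrow> noncrossing \<pi>'"
  unfolding noncrossing_iff_not_crosses by blast

lemma nc_pair_partition_restrict:
  assumes P: "nc_pair_partition \<pi> S" and "T \<subseteq> S" and split: "\<And>B. B \<in> \<pi> \<Longrightarrow> B \<subseteq> T \<or> B \<inter> T = {}"
  shows "nc_pair_partition {B \<in> \<pi>. B \<subseteq> T} T"
proof -
  have pp: "pair_partition \<pi> S" and nc: "noncrossing \<pi>"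
    using P unfolding nc_pair_partition_def by auto
  have U: "\<Union>{B \<in> \<pi>. B \<subseteq> T} = T"
  proof (intro equalityI subsetI)
    fix x assume "x \<in> T"
    then have "x \<in> \<Union>\<pi>" using pp \<open>T \<subseteq> S\<close> unfolding pair_partition_def by blast
    then obtain B where "B \<in> \<pi>" "x \<in> B" by blast
    then show "x \<in> \<Union>{B \<in> \<pi>. B \<subseteq> T}" using split \<open>x \<in> T\<close> by blast
  qed auto
  have "pair_partition {B \<in> \<pi>. B \<subseteq> T} T"
    unfolding pair_partition_def
  proof (intro conjI)
    show "\<Union>{B \<in> \<pi>. B \<subseteq> T} = T" by (fact U)
  qed (use pp in \<open>simp_all add: pair_partition_def\<close>)
  moreover have "noncrossing {B \<in> \<pi>. B \<subseteq> T}"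
    by (rule noncrossing_subset[OF nc]) blast
  ultimately show ?thesis unfolding nc_pair_partition_def ..
qed

lemma card_pair_partition:
  assumes "pair_partition \<pi> S" "finite S"
  shows "card S = 2 * card \<pi>"
proof -
  have "card S = card (\<Union>\<pi>)" using assms(1) unfolding pair_partition_def by simp
  also have "\<dots> = (\<Sum>B\<in>\<pi>. card B)"
    using assms(1) by (intro card_Union_disjoint)
      (auto simp: pair_partition_def pairwise_def disjnt_def intro: card_ge_0_finite)
  also have "\<dots> = 2 * card \<pi>" using assms(1) unfolding pair_partition_def by simp
  finally show ?thesis .
qed

lemma pair_partition_block_eq:
  "pair_partition \<pi> S \<Longrightarrow> B \<in> \<pi> \<Longrightarrow> B' \<in> \<pi> \<Longrightarrow> x \<in> B \<Longrightarrow> x \<in> B' \<Longrightarrow> B = B'"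
  unfolding pair_partition_def by blast

lemma nc_pair_partition_nested_or_after:
  assumes P: "nc_pair_partition \<pi> S" and uv: "{u, v} \<in> \<pi>" "u < v"
    and B: "B \<in> \<pi>" "B \<noteq> {u, v}" "\<And>k. k \<in> B \<Longrightarrow> u < k"
  shows "B \<subseteq> {u<..<v} \<or> B \<subseteq> {v<..}"
proof (rule ccontr)
  have pp: "pair_partition \<pi> S" and nc: "noncrossing \<pi>" using P unfolding nc_pair_partition_def by auto
  have "v \<notin> B"
  proof
    assume "v \<in> B"
    then have "B = {u, v}" using pair_partition_block_eq[OF pp B(1) uv(1)] by simp
    then show False using B(2) by contradiction
  qed
  assume "\<not> (B \<subseteq> {u<..<v} \<or> B \<subseteq> {v<..})"
  then obtain c d where c: "c \<in> B" "\<not> c < v" and d: "d \<in> B" "\<not> v < d"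
    using B(3) by (auto simp: subset_iff)
  have "c \<noteq> v" "d \<noteq> v" using \<open>v \<notin> B\<close> c d by auto
  then have "u < d" "d < v" "v < c" using B(3)[OF d(1)] c(2) d(2) by auto
  then have "crosses {u, v} B" using c(1) d(1) by (intro crossesI[of u d v c]) simp_all
  moreover have "\<not> crosses {u, v} B"
    using nc[unfolded noncrossing_iff_not_crosses, rule_format, OF uv(1) B(1)] B(2) by argo
  ultimately show False by contradiction
qed

definition restrict_lab :: "nat set set \<Rightarrow> (nat set \<Rightarrow> 'a::zero) \<Rightarrow> nat set \<Rightarrow> 'a" where
  "restrict_lab \<pi> l = (\<lambda>B. if B \<in> \<pi> then l B else 0)"

locale first_block_split =
  fixes a m n :: nat and \<pi>1 \<pi>2 :: "nat set set"
  assumes m_le_n: "m \<le> n"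
    and inner: "nc_pair_partition \<pi>1 {a+1+1..a+1+2*m}"
    and right: "nc_pair_partition \<pi>2 {a+2*m+2+1..a+2*m+2+2*(n-m)}"
begin

abbreviation first_block :: "nat set" where
  "first_block \<equiv> {a+1, a+2*m+2}"

abbreviation glued :: "nat set set" where
  "glued \<equiv> insert first_block (\<pi>1 \<union> \<pi>2)"

lemma inner_bounds: "B \<in> \<pi>1 \<Longrightarrow> k \<in> B \<Longrightarrow> a+1 < k \<and> k < a+2*m+2"
  using nc_pair_partition_block[OF inner] by fastforce

lemma right_bounds: "B \<in> \<pi>2 \<Longrightarrow> k \<in> B \<Longrightarrow> a+2*m+2 < k \<and> k \<le> a+2*(n+1)"
  using nc_pair_partition_block[OF right] m_le_n by fastforce

lemma block_nonempty: "B \<in> \<pi>1 \<union> \<pi>2 \<Longrightarrow> \<exists>k. k \<in> B"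
  using nc_pair_partition_block[OF inner] nc_pair_partition_block[OF right]
  by (metis Un_iff all_not_in_conv card.empty zero_neq_numeral)

lemma first_block_notin: "first_block \<notin> \<pi>1" "first_block \<notin> \<pi>2"
  using inner_bounds[of first_block "a+1"] right_bounds[of first_block "a+1"] by auto

lemma inner_right_disjoint: "\<pi>1 \<inter> \<pi>2 = {}"
  using block_nonempty inner_bounds right_bounds by (fastforce simp: disjoint_iff)

lemma restrict_glued_inner: "{B \<in> glued. B \<subseteq> {a+1+1..a+1+2*m}} = \<pi>1"
proof -
  have "\<not> B \<subseteq> {a+1+1..a+1+2*m}" if "B \<in> \<pi>2" for B
    using that block_nonempty[of B] right_bounds[OF that] by fastforce
  then show ?thesis using nc_pair_partition_block[OF inner] by auto
qed

lemma restrict_glued_right: "{B \<in> glued. B \<subseteq> {a+2*m+2+1..a+2*m+2+2*(n-m)}} = \<pi>2"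
proof -
  have "\<not> B \<subseteq> {a+2*m+2+1..a+2*m+2+2*(n-m)}" if "B \<in> \<pi>1" for B
    using that block_nonempty[of B] inner_bounds[OF that] by fastforce
  then show ?thesis using nc_pair_partition_block[OF right] by auto
qed

lemma pair_partition_glued: "pair_partition glued {a+1..a+2*(n+1)}"
proof -
  have pp1: "pair_partition \<pi>1 {a+1+1..a+1+2*m}" and pp2: "pair_partition \<pi>2 {a+2*m+2+1..a+2*m+2+2*(n-m)}"
    using inner right unfolding nc_pair_partition_def by auto
  have "\<Union>glued = first_block \<union> {a+1+1..a+1+2*m} \<union> {a+2*m+2+1..a+2*m+2+2*(n-m)}"
    using pp1 pp2 unfolding pair_partition_def by auto
  also have "\<dots> = {a+1..a+2*(n+1)}"
    using m_le_n by (intro set_eqI) (simp; arith)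
  finally have union: "\<Union>glued = {a+1..a+2*(n+1)}" .
  have not_first: "k \<notin> first_block" if "B \<in> \<pi>1 \<union> \<pi>2" "k \<in> B" for B k
    using that inner_bounds right_bounds by fastforce
  have inner_right: "k \<notin> B'" if "B \<in> \<pi>1" "B' \<in> \<pi>2" "k \<in> B" for B B' k
    using inner_bounds[OF that(1,3)] right_bounds[OF that(2)] by fastforce
  have same: "B = B'" if B: "B \<in> glued" "B' \<in> glued" and k: "k \<in> B" "k \<in> B'" for B B' k
  proof -
    consider "B = first_block" "B' = first_block" | "B \<in> \<pi>1" "B' \<in> \<pi>1" | "B \<in> \<pi>2" "B' \<in> \<pi>2"
      using B k not_first inner_right by blast
    then show ?thesis
      by cases (use k pair_partition_block_eq[OF pp1] pair_partition_block_eq[OF pp2] in blast)+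
  qed
  show ?thesis
    unfolding pair_partition_def
  proof (intro conjI ballI impI)
    show "card B = 2" if "B \<in> glued" for B
      using that pp1 pp2 unfolding pair_partition_def by auto
    show "B \<inter> B' = {}" if "B \<in> glued" "B' \<in> glued" "B \<noteq> B'" for B B'
      using that same by blast
  qed (fact union)
qed

lemma noncrossing_glued: "noncrossing glued"
  unfolding noncrossing_iff_not_crosses
proof (intro ballI impI)
  have nc1: "noncrossing \<pi>1" and nc2: "noncrossing \<pi>2"
    using inner right unfolding nc_pair_partition_def by auto
  have nested: "\<not> crosses B first_block \<and> \<not> crosses first_block B" if "B \<in> \<pi>1" for B
    using not_crosses_if_nested[of B] inner_bounds[OF that] by blast
  have first_right: "\<not> crosses first_block B \<and> \<not> crosses B first_block" if "B \<in> \<pi>2" for B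
    using not_crosses_if_less[of first_block B] right_bounds[OF that] by force
  have inner_right: "\<not> crosses B B' \<and> \<not> crosses B' B" if "B \<in> \<pi>1" "B' \<in> \<pi>2" for B B'
    using not_crosses_if_less[of B B'] inner_bounds[OF that(1)] right_bounds[OF that(2)] by force
  fix B B' assume B: "B \<in> glued" "B' \<in> glued" "B \<noteq> B'"
  consider "B \<in> \<pi>1" "B' \<in> \<pi>1" | "B \<in> \<pi>2" "B' \<in> \<pi>2" | "B = first_block \<or> B' = first_block"
    | "B \<in> \<pi>1" "B' \<in> \<pi>2" | "B \<in> \<pi>2" "B' \<in> \<pi>1"
    using B by blast
  then show "\<not> crosses B B'"
  proof cases
    case 1
    then show ?thesis using nc1[unfolded noncrossing_iff_not_crosses, rule_format] B(3) by simp
  next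
    case 2
    then show ?thesis using nc2[unfolded noncrossing_iff_not_crosses, rule_format] B(3) by simp
  next
    case 3
    then show ?thesis using B nested first_right by auto
  qed (use inner_right in auto)
qed

lemma nc_pair_partition_glued: "nc_pair_partition glued {a+1..a+2*(n+1)}"
  unfolding nc_pair_partition_def using pair_partition_glued noncrossing_glued ..

sublocale enclosing_split first_block \<pi>1 \<pi>2
proof
  show "outer first_block B" if "B \<in> \<pi>1" for B
    using inner_bounds[OF that] by (subst outer_doubleton_iff) auto
  show "\<not> outer X first_block" if "X \<in> \<pi>1 \<union> \<pi>2" for X
    using that outer_bounds[of X first_block] inner_bounds right_bounds by fastforce
  show "\<not> outer X B" if "X \<in> \<pi>2" "B \<in> \<pi>1" for X B
    using outer_bounds[of X B] block_nonempty[of B] that inner_bounds right_bounds by fastforce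
  show "\<not> outer X B" if "X \<in> \<pi>1" "B \<in> \<pi>2" for X B
    using outer_bounds[of X B] block_nonempty[of B] that inner_bounds right_bounds by fastforce
  show "\<not> outer first_block B" if "B \<in> \<pi>2" for B
    using block_nonempty[of B] that right_bounds by (subst outer_doubleton_iff) fastforce+
qed


abbreviation glued_lab :: "'a \<Rightarrow> (nat set \<Rightarrow> 'a) \<Rightarrow> (nat set \<Rightarrow> 'a) \<Rightarrow> nat set \<Rightarrow> 'a" where
  "glued_lab x l1 l2 \<equiv> \<lambda>B. if B = first_block then x else if B \<in> \<pi>1 then l1 B else l2 B"

lemma glued_lab_inner: "B \<in> \<pi>1 \<Longrightarrow> glued_lab x l1 l2 B = l1 B"
  using first_block_notin by auto

lemma glued_lab_right: "B \<in> \<pi>2 \<Longrightarrow> glued_lab x l1 l2 B = l2 B"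
  using first_block_notin inner_right_disjoint by auto

lemma restrict_lab_glued_lab:
  "restrict_lab \<pi>1 (glued_lab x l1 l2) = restrict_lab \<pi>1 l1"
  "restrict_lab \<pi>2 (glued_lab x l1 l2) = restrict_lab \<pi>2 l2"
  unfolding restrict_lab_def using first_block_notin inner_right_disjoint by (fastforce intro!: ext)+

lemma V_local_under_glued_lab_iff:
  "V_local_under glued (glued_lab x l1 l2) t \<longleftrightarrow>
    V_local_under \<pi>1 l1 x \<and> V_local_under \<pi>2 l2 t \<and> x \<noteq> t \<and>
    (\<forall>B\<in>\<pi>1. root_block \<pi>1 B \<longrightarrow> \<not> (l1 B < x \<and> t < x))"
proof -
  have "V_local_under \<pi>1 (glued_lab x l1 l2) x \<longleftrightarrow> V_local_under \<pi>1 l1 x"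
    by (rule V_local_under_cong) (rule glued_lab_inner)
  moreover have "V_local_under \<pi>2 (glued_lab x l1 l2) t \<longleftrightarrow> V_local_under \<pi>2 l2 t"
    by (rule V_local_under_cong) (rule glued_lab_right)
  moreover have "(\<forall>B\<in>\<pi>1. root_block \<pi>1 B \<longrightarrow> \<not> (glued_lab x l1 l2 B < x \<and> t < x)) \<longleftrightarrow>
      (\<forall>B\<in>\<pi>1. root_block \<pi>1 B \<longrightarrow> \<not> (l1 B < x \<and> t < x))"
    using first_block_notin(1) by (auto simp: glued_lab_inner)
  ultimately show ?thesis
    unfolding V_local_under_insert_iff by (simp only: simp_thms(6) if_True)
qed

lemma bij_betw_glued_lab:
  assumes "bij_betw l1 \<pi>1 L1" "bij_betw l2 \<pi>2 L2" "x \<notin> L1 \<union> L2" "L1 \<inter> L2 = {}"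
  shows "bij_betw (glued_lab x l1 l2) glued (insert x (L1 \<union> L2))"
proof -
  have "bij_betw (glued_lab x l1 l2) \<pi>1 L1 \<longleftrightarrow> bij_betw l1 \<pi>1 L1"
    by (rule bij_betw_cong) (rule glued_lab_inner)
  moreover have "bij_betw (glued_lab x l1 l2) \<pi>2 L2 \<longleftrightarrow> bij_betw l2 \<pi>2 L2"
    by (rule bij_betw_cong) (rule glued_lab_right)
  ultimately have "bij_betw (glued_lab x l1 l2) \<pi>1 L1" "bij_betw (glued_lab x l1 l2) \<pi>2 L2"
    using assms(1,2) by auto
  then have "bij_betw (glued_lab x l1 l2) (\<pi>1 \<union> \<pi>2) (L1 \<union> L2)"
    using inner_right_disjoint assms(4) by (intro bij_betw_combine) auto
  moreover have "bij_betw (glued_lab x l1 l2) {first_block} {x}" by simp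
  ultimately have "bij_betw (glued_lab x l1 l2) ({first_block} \<union> (\<pi>1 \<union> \<pi>2)) ({x} \<union> (L1 \<union> L2))"
    using assms(3) by (intro bij_betw_combine[of _ "{first_block}"]) auto
  then show ?thesis by simp
qed

end

lemma card_2_obtain_other:
  assumes "card B = 2" "x \<in> B"
  obtains y where "y \<noteq> x" "B = {x, y}"
  using assms unfolding card_2_iff by (metis doubleton_eq_iff insertE singletonD)

lemma nc_pair_partition_first_block:
  fixes a n :: nat
  assumes P: "nc_pair_partition \<pi> {a+1..a+2*(n+1)}"
  obtains b where "{a+1, b} \<in> \<pi>" "a+1 < b" "b \<le> a+2*(n+1)"
    "\<And>B. B \<in> \<pi> \<Longrightarrow> B \<noteq> {a+1, b} \<Longrightarrow> B \<subseteq> {a+1<..<b} \<or> B \<subseteq> {b<..}"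
proof -
  let ?S = "{a+1..a+2*(n+1)}"
  have pp: "pair_partition \<pi> ?S" using P unfolding nc_pair_partition_def by simp
  have "a+1 \<in> \<Union>\<pi>" using pp unfolding pair_partition_def by simp
  then obtain B0 where B0: "B0 \<in> \<pi>" "a+1 \<in> B0" by blast
  then obtain b where b: "b \<noteq> a+1" "B0 = {a+1, b}"
    using nc_pair_partition_block[OF P] card_2_obtain_other by metis
  then have b_bounds: "a+1 < b" "b \<le> a+2*(n+1)" using nc_pair_partition_block[OF P B0(1)] by auto
  have above: "a+1 < k" if "B \<in> \<pi>" "B \<noteq> B0" "k \<in> B" for B k
  proof -
    have "k \<in> ?S" using nc_pair_partition_block[OF P that(1)] that(3) by auto
    moreover have "k \<noteq> a+1" using pair_partition_block_eq[OF pp that(1) B0(1)] that B0(2) by auto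
    ultimately show ?thesis by simp
  qed
  show ?thesis
  proof (rule that[of b])
    show "B \<subseteq> {a+1<..<b} \<or> B \<subseteq> {b<..}" if "B \<in> \<pi>" "B \<noteq> {a+1, b}" for B
      using nc_pair_partition_nested_or_after[OF P _ b_bounds(1) that] above that B0(1) b(2) by blast
  qed (use B0(1) b b_bounds in auto)
qed

lemma nc_pair_partition_split_first:
  fixes a n :: nat
  assumes P: "nc_pair_partition \<pi> {a+1..a+2*(n+1)}"
  obtains m where
    "first_block_split a m n {B \<in> \<pi>. B \<subseteq> {a+1+1..a+1+2*m}} {B \<in> \<pi>. B \<subseteq> {a+2*m+2+1..a+2*m+2+2*(n-m)}}"
    "\<pi> = insert {a+1, a+2*m+2}
       ({B \<in> \<pi>. B \<subseteq> {a+1+1..a+1+2*m}} \<union> {B \<in> \<pi>. B \<subseteq> {a+2*m+2+1..a+2*m+2+2*(n-m)}})"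
proof -
  obtain b where B0: "{a+1, b} \<in> \<pi>" and b_bounds: "a+1 < b" "b \<le> a+2*(n+1)"
    and side: "\<And>B. B \<in> \<pi> \<Longrightarrow> B \<noteq> {a+1, b} \<Longrightarrow> B \<subseteq> {a+1<..<b} \<or> B \<subseteq> {b<..}"
    using nc_pair_partition_first_block[OF P] by blast
  have in_S: "B \<subseteq> {a+1..a+2*(n+1)}" if "B \<in> \<pi>" for B using nc_pair_partition_block[OF P that] by blast
  define \<pi>1 where "\<pi>1 = {B \<in> \<pi>. B \<subseteq> {a+1<..<b}}"
  define \<pi>2 where "\<pi>2 = {B \<in> \<pi>. B \<subseteq> {b<..a+2*(n+1)}}"
  have nc1: "nc_pair_partition \<pi>1 {a+1<..<b}"
    unfolding \<pi>1_def using b_bounds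
    by (intro nc_pair_partition_restrict[OF P]) (auto dest!: side)
  have nc2: "nc_pair_partition \<pi>2 {b<..a+2*(n+1)}"
    unfolding \<pi>2_def
  proof (rule nc_pair_partition_restrict[OF P])
    show "B \<subseteq> {b<..a+2*(n+1)} \<or> B \<inter> {b<..a+2*(n+1)} = {}" if B: "B \<in> \<pi>" for B
    proof (cases "B = {a+1, b}")
      case False
      then consider "B \<subseteq> {a+1<..<b}" | "B \<subseteq> {b<..}" using side B by blast
      then show ?thesis using in_S[OF B] by cases (auto simp: subset_iff)
    qed (use b_bounds in auto)
  qed (use b_bounds in auto)
  have split: "\<pi> = insert {a+1, b} (\<pi>1 \<union> \<pi>2)"
    unfolding \<pi>1_def \<pi>2_def using B0 side in_S by fastforce
  define m where "m = card \<pi>1"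
  \<comment> \<open>the inner interval holds \<open>m\<close> pairs, which pins down the partner of \<open>a + 1\<close>\<close>
  have "card {a+1<..<b} = 2 * m"
    unfolding m_def using nc1 by (intro card_pair_partition) (auto simp: nc_pair_partition_def)
  then have b_eq: "b = a+2*m+2" using b_bounds by simp
  then have m_le: "m \<le> n" using b_bounds by simp
  have I1: "{a+1<..<b} = {a+1+1..a+1+2*m}" and I2: "{b<..a+2*(n+1)} = {a+2*m+2+1..a+2*m+2+2*(n-m)}"
    using b_eq m_le by auto
  show ?thesis
  proof
    show "first_block_split a m n {B \<in> \<pi>. B \<subseteq> {a+1+1..a+1+2*m}} {B \<in> \<pi>. B \<subseteq> {a+2*m+2+1..a+2*m+2+2*(n-m)}}"
      using m_le nc1 nc2 unfolding first_block_split_def \<pi>1_def \<pi>2_def I1 I2 by blast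
    show "\<pi> = insert {a+1, a+2*m+2}
       ({B \<in> \<pi>. B \<subseteq> {a+1+1..a+1+2*m}} \<union> {B \<in> \<pi>. B \<subseteq> {a+2*m+2+1..a+2*m+2+2*(n-m)}})"
      using split b_eq unfolding \<pi>1_def \<pi>2_def I1 I2 by simp
  qed
qed

section \<open>Gluing labelled partitions\<close>

lemma OV_under_first_block_split:
  "m \<le> n \<Longrightarrow> (\<pi>1, l1) \<in> OV_under (a+1) m L1 x \<Longrightarrow> (\<pi>2, l2) \<in> OV_under (a+2*m+2) (n-m) L2 t \<Longrightarrow>
    first_block_split a m n \<pi>1 \<pi>2"
  unfolding OV_under_def first_block_split_def by auto

lemma OV_under_lab_outside: "(\<pi>, l) \<in> OV_under a n L t \<Longrightarrow> B \<notin> \<pi> \<Longrightarrow> l B = 0"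
  unfolding OV_under_def by auto

lemma OV_under_lab_image: "(\<pi>, l) \<in> OV_under a n L t \<Longrightarrow> l ` \<pi> = L"
  unfolding OV_under_def bij_betw_def by auto

lemma finite_OV_under:
  assumes "finite L"
  shows "finite (OV_under a n L t)"
proof (rule finite_subset)
  let ?S = "{a+1..a+2*n}"
  show "OV_under a n L t \<subseteq> Pow (Pow ?S) \<times> {l. \<forall>B. (B \<in> Pow ?S \<longrightarrow> l B \<in> insert 0 L) \<and> (B \<notin> Pow ?S \<longrightarrow> l B = 0)}"
    unfolding OV_under_def bij_betw_def using nc_pair_partition_block by fastforce
  show "finite (Pow (Pow ?S) \<times> {l. \<forall>B. (B \<in> Pow ?S \<longrightarrow> l B \<in> insert 0 L) \<and> (B \<notin> Pow ?S \<longrightarrow> l B = 0)})"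
    using finite_set_of_finite_funs[of "Pow ?S" "insert 0 L" 0] assms by simp
qed

definition glue :: "nat \<Rightarrow> (nat \<times> 'a set \<times> 'a) \<times> (nat set set \<times> (nat set \<Rightarrow> 'a)) \<times>
    (nat set set \<times> (nat set \<Rightarrow> 'a)) \<Rightarrow> nat set set \<times> (nat set \<Rightarrow> 'a)" where
  "glue a = (\<lambda>((m, L1, x), (\<pi>1, l1), (\<pi>2, l2)). (insert {a+1, a+2*m+2} (\<pi>1 \<union> \<pi>2),
      \<lambda>B. if B = {a+1, a+2*m+2} then x else if B \<in> \<pi>1 then l1 B else l2 B))"

text \<open>\<open>m\<close> is the number of pairs nested in the first block, \<open>L1\<close> the set of labels of the first
  block and the blocks nested in it, and \<open>x \<in> L1\<close> the label of the first block itself.\<close>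
definition glue_index :: "nat \<Rightarrow> 'a::linorder set \<Rightarrow> 'a \<Rightarrow> (nat \<times> 'a set \<times> 'a) set" where
  "glue_index n L t = (SIGMA m:{0..n}. SIGMA L1:{L1. L1 \<subseteq> L \<and> card L1 = m+1}.
      {x \<in> L1. t < x \<longrightarrow> (\<forall>y\<in>L1. x \<le> y)})"

definition glue_dom :: "nat \<Rightarrow> nat \<Rightarrow> 'a::{linorder,zero} set \<Rightarrow> 'a \<Rightarrow>
    ((nat \<times> 'a set \<times> 'a) \<times> (nat set set \<times> (nat set \<Rightarrow> 'a)) \<times> (nat set set \<times> (nat set \<Rightarrow> 'a))) set" where
  "glue_dom a n L t = (SIGMA (m, L1, x):glue_index n L t.
      OV_under (a+1) m (L1 - {x}) x \<times> OV_under (a+2*m+2) (n-m) (L - L1) t)"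

lemma mem_glue_dom:
  "((m, L1, x), (\<pi>1, l1), (\<pi>2, l2)) \<in> glue_dom a n L t \<longleftrightarrow>
    m \<le> n \<and> L1 \<subseteq> L \<and> card L1 = m+1 \<and> x \<in> L1 \<and> (t < x \<longrightarrow> (\<forall>y\<in>L1. x \<le> y)) \<and>
    (\<pi>1, l1) \<in> OV_under (a+1) m (L1 - {x}) x \<and> (\<pi>2, l2) \<in> OV_under (a+2*m+2) (n-m) (L - L1) t"
  unfolding glue_dom_def glue_index_def by auto

lemma glue_mem_OV_under:
  assumes d: "((m, L1, x), (\<pi>1, l1), (\<pi>2, l2)) \<in> glue_dom a n L t" and "t \<notin> L"
  shows "glue a ((m, L1, x), (\<pi>1, l1), (\<pi>2, l2)) \<in> OV_under a (n+1) L t"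
proof -
  have L1: "L1 \<subseteq> L" "x \<in> L1" and x_min: "t < x \<longrightarrow> (\<forall>y\<in>L1. x \<le> y)"
    and P1: "(\<pi>1, l1) \<in> OV_under (a+1) m (L1 - {x}) x" and P2: "(\<pi>2, l2) \<in> OV_under (a+2*m+2) (n-m) (L - L1) t"
    and split: "first_block_split a m n \<pi>1 \<pi>2"
    using d OV_under_first_block_split unfolding mem_glue_dom by auto
  interpret first_block_split a m n \<pi>1 \<pi>2 by (fact split)
  have V1: "V_local_under \<pi>1 l1 x" and V2: "V_local_under \<pi>2 l2 t"
    using P1 P2 unfolding OV_under_def by simp_all
  have "bij_betw (glued_lab x l1 l2) glued (insert x ((L1 - {x}) \<union> (L - L1)))"
    using P1 P2 L1 by (intro bij_betw_glued_lab) (auto simp: OV_under_def)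
  moreover have "insert x ((L1 - {x}) \<union> (L - L1)) = L" using L1 by auto
  ultimately have bij: "bij_betw (glued_lab x l1 l2) glued L" by simp
  have zero: "\<forall>B. B \<notin> glued \<longrightarrow> glued_lab x l1 l2 B = 0"
    using OV_under_lab_outside[OF P2] by auto
  have "\<not> (l1 B < x \<and> t < x)" if "B \<in> \<pi>1" for B
  proof -
    have "l1 B \<in> L1 - {x}" using that OV_under_lab_image[OF P1] by blast
    then show ?thesis using x_min by auto
  qed
  moreover have "x \<noteq> t" using L1 \<open>t \<notin> L\<close> by auto
  ultimately have V: "V_local_under glued (glued_lab x l1 l2) t"
    unfolding V_local_under_glued_lab_iff using V1 V2 by blast
  have "glue a ((m, L1, x), (\<pi>1, l1), (\<pi>2, l2)) = (glued, glued_lab x l1 l2)" unfolding glue_def by simp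
  then show ?thesis
    unfolding OV_under_def using nc_pair_partition_glued bij zero V by simp
qed

lemma pair_partition_finite: "pair_partition \<pi> S \<Longrightarrow> finite S \<Longrightarrow> finite \<pi>"
  unfolding pair_partition_def using finite_UnionD by blast

context first_block_split
begin

lemma OV_under_glued_parts:
  fixes lab :: "nat set \<Rightarrow> 'a::{linorder,zero}"
  assumes P: "(glued, lab) \<in> OV_under a (n+1) L t"
  defines "x \<equiv> lab first_block"
  shows "lab = glued_lab x (restrict_lab \<pi>1 lab) (restrict_lab \<pi>2 lab)"
    and "(\<pi>1, restrict_lab \<pi>1 lab) \<in> OV_under (a+1) m (lab ` \<pi>1) x"
    and "(\<pi>2, restrict_lab \<pi>2 lab) \<in> OV_under (a+2*m+2) (n-m) (lab ` \<pi>2) t"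
    and "x \<noteq> t"
    and "t < x \<Longrightarrow> B \<in> \<pi>1 \<Longrightarrow> x < lab B"
proof -
  let ?l1 = "restrict_lab \<pi>1 lab" and ?l2 = "restrict_lab \<pi>2 lab"
  show lab_eq: "lab = glued_lab x ?l1 ?l2"
    using OV_under_lab_outside[OF P] inner_right_disjoint
    unfolding x_def restrict_lab_def by (fastforce simp: disjoint_iff)
  have inj: "inj_on lab glued" using P unfolding OV_under_def bij_betw_def by simp
  have "bij_betw lab \<pi>1 (lab ` \<pi>1)" "bij_betw lab \<pi>2 (lab ` \<pi>2)"
    using inj by (auto intro: inj_on_imp_bij_betw inj_on_subset)
  then have bij1: "bij_betw ?l1 \<pi>1 (lab ` \<pi>1)" and bij2: "bij_betw ?l2 \<pi>2 (lab ` \<pi>2)"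
    by (simp_all add: restrict_lab_def cong: bij_betw_cong)
  have "V_local_under glued (glued_lab x ?l1 ?l2) t"
    using P lab_eq unfolding OV_under_def by simp
  then have V1: "V_local_under \<pi>1 ?l1 x" and V2: "V_local_under \<pi>2 ?l2 t" and "x \<noteq> t"
    and roots: "\<And>B. B \<in> \<pi>1 \<Longrightarrow> root_block \<pi>1 B \<Longrightarrow> \<not> (?l1 B < x \<and> t < x)"
    unfolding V_local_under_glued_lab_iff by blast+
  show "x \<noteq> t" by fact
  show "(\<pi>1, ?l1) \<in> OV_under (a+1) m (lab ` \<pi>1) x"
    using inner bij1 V1 unfolding OV_under_def by (simp add: restrict_lab_def)
  show "(\<pi>2, ?l2) \<in> OV_under (a+2*m+2) (n-m) (lab ` \<pi>2) t"
    using right bij2 V2 unfolding OV_under_def by (simp add: restrict_lab_def)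
  assume "t < x" and "B \<in> \<pi>1"
  have "finite \<pi>1"
    using inner pair_partition_finite unfolding nc_pair_partition_def by blast
  moreover have "x < ?l1 B" if "B \<in> \<pi>1" "root_block \<pi>1 B" for B
    using roots[OF that] V1 that \<open>t < x\<close> unfolding V_local_under_def by force
  ultimately have "x < ?l1 B"
    using V_local_under_above_roots[OF _ V1 _ \<open>B \<in> \<pi>1\<close>] by blast
  then show "x < lab B" using \<open>B \<in> \<pi>1\<close> unfolding restrict_lab_def by simp
qed

end

lemma OV_under_Suc_subset_glue:
  "OV_under a (n+1) L t \<subseteq> glue a ` glue_dom a n L t"
proof clarify
  fix \<pi> lab assume P: "(\<pi>, lab) \<in> OV_under a (n+1) L t"
  then have "nc_pair_partition \<pi> {a+1..a+2*(n+1)}" unfolding OV_under_def by simp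
  then obtain m where
    split: "first_block_split a m n {B \<in> \<pi>. B \<subseteq> {a+1+1..a+1+2*m}} {B \<in> \<pi>. B \<subseteq> {a+2*m+2+1..a+2*m+2+2*(n-m)}}"
    and \<pi>_eq: "\<pi> = insert {a+1, a+2*m+2}
       ({B \<in> \<pi>. B \<subseteq> {a+1+1..a+1+2*m}} \<union> {B \<in> \<pi>. B \<subseteq> {a+2*m+2+1..a+2*m+2+2*(n-m)}})"
    by (rule nc_pair_partition_split_first)
  define \<pi>1 where "\<pi>1 = {B \<in> \<pi>. B \<subseteq> {a+1+1..a+1+2*m}}"
  define \<pi>2 where "\<pi>2 = {B \<in> \<pi>. B \<subseteq> {a+2*m+2+1..a+2*m+2+2*(n-m)}}"
  interpret first_block_split a m n \<pi>1 \<pi>2 using split unfolding \<pi>1_def \<pi>2_def .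
  have \<pi>_glued: "\<pi> = glued" using \<pi>_eq unfolding \<pi>1_def \<pi>2_def .
  have P': "(glued, lab) \<in> OV_under a (n+1) L t" using P \<pi>_glued by simp
  define x where "x = lab first_block"
  define L1 where "L1 = insert x (lab ` \<pi>1)"
  note parts = OV_under_glued_parts[OF P', folded x_def]
  have inj: "inj_on lab glued" using P' unfolding OV_under_def bij_betw_def by simp
  have x_notin: "x \<notin> lab ` \<pi>1" "x \<notin> lab ` \<pi>2"
    using inj first_block_notin unfolding x_def inj_on_def by blast+
  have "lab ` \<pi>1 \<inter> lab ` \<pi>2 = {}"
    using inj inner_right_disjoint unfolding inj_on_def by blast
  moreover have "L = insert x (lab ` \<pi>1 \<union> lab ` \<pi>2)"
    using OV_under_lab_image[OF P'] unfolding x_def by auto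
  ultimately have L1_diff: "L1 - {x} = lab ` \<pi>1" and L_diff: "L - L1 = lab ` \<pi>2" and "L1 \<subseteq> L"
    using x_notin unfolding L1_def by auto
  have "card {a+1+1..a+1+2*m} = 2 * card \<pi>1"
    using inner by (intro card_pair_partition) (auto simp: nc_pair_partition_def)
  moreover have "inj_on lab \<pi>1" using inj by (rule inj_on_subset) blast
  ultimately have "card (lab ` \<pi>1) = m" by (simp add: card_image)
  moreover have "finite \<pi>1"
    using inner pair_partition_finite unfolding nc_pair_partition_def by blast
  ultimately have "card L1 = m + 1"
    using x_notin unfolding L1_def by simp
  moreover have "t < x \<longrightarrow> (\<forall>y\<in>L1. x \<le> y)"
    using parts(5) unfolding L1_def by fastforce
  ultimately have "((m, L1, x), (\<pi>1, restrict_lab \<pi>1 lab), (\<pi>2, restrict_lab \<pi>2 lab)) \<in> glue_dom a n L t"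
    unfolding mem_glue_dom L1_diff L_diff using m_le_n \<open>L1 \<subseteq> L\<close> parts(2,3) by (simp add: L1_def)
  moreover have "glue a ((m, L1, x), (\<pi>1, restrict_lab \<pi>1 lab), (\<pi>2, restrict_lab \<pi>2 lab)) = (\<pi>, lab)"
    unfolding glue_def using \<pi>_glued parts(1) by simp
  ultimately show "(\<pi>, lab) \<in> glue a ` glue_dom a n L t" by (metis image_eqI)
qed

lemma OV_under_restrict_lab: "(\<pi>, l) \<in> OV_under a n L t \<Longrightarrow> l = restrict_lab \<pi> l"
  unfolding restrict_lab_def using OV_under_lab_outside by fastforce

lemma glue_eq_imp_eq:
  assumes d: "((m, L1, x), (\<pi>1, l1), (\<pi>2, l2)) \<in> glue_dom a n L t"
    and d': "((m', L1', x'), (\<pi>1', l1'), (\<pi>2', l2')) \<in> glue_dom a n L t"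
    and eq: "glue a ((m, L1, x), (\<pi>1, l1), (\<pi>2, l2)) = glue a ((m', L1', x'), (\<pi>1', l1'), (\<pi>2', l2'))"
  shows "((m, L1, x), (\<pi>1, l1), (\<pi>2, l2)) = ((m', L1', x'), (\<pi>1', l1'), (\<pi>2', l2'))"
proof -
  have P1: "(\<pi>1, l1) \<in> OV_under (a+1) m (L1 - {x}) x" and P2: "(\<pi>2, l2) \<in> OV_under (a+2*m+2) (n-m) (L - L1) t"
    and P1': "(\<pi>1', l1') \<in> OV_under (a+1) m' (L1' - {x'}) x'"
    and P2': "(\<pi>2', l2') \<in> OV_under (a+2*m'+2) (n-m') (L - L1') t"
    and "x \<in> L1" "x' \<in> L1'"
    using d d' unfolding mem_glue_dom by auto
  interpret S: first_block_split a m n \<pi>1 \<pi>2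
    using d OV_under_first_block_split unfolding mem_glue_dom by blast
  interpret S': first_block_split a m' n \<pi>1' \<pi>2'
    using d' OV_under_first_block_split unfolding mem_glue_dom by blast
  have glued: "S.glued = S'.glued" and lab: "S.glued_lab x l1 l2 = S'.glued_lab x' l1' l2'"
    using eq unfolding glue_def by simp_all
  \<comment> \<open>both first blocks contain \<open>a + 1\<close>\<close>
  have "{a+1, a+2*m'+2} \<in> S.glued" using glued by (metis insertI1)
  then have "{a+1, a+2*m+2} = {a+1, a+2*m'+2}"
    using pair_partition_block_eq[OF S.pair_partition_glued, of "{a+1, a+2*m+2}" _ "a+1"] by simp
  then have m_eq: "m' = m" by (simp add: doubleton_eq_iff)
  have glued': "insert {a+1, a+2*m+2} (\<pi>1' \<union> \<pi>2') = S.glued" using glued m_eq by simp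
  have \<pi>1_eq: "\<pi>1' = \<pi>1"
    using S'.restrict_glued_inner S.restrict_glued_inner unfolding m_eq glued' by simp
  have \<pi>2_eq: "\<pi>2' = \<pi>2"
    using S'.restrict_glued_right S.restrict_glued_right unfolding m_eq glued' by simp
  have x_eq: "x' = x" using fun_cong[OF lab, of "{a+1, a+2*m+2}"] m_eq by simp
  have l1_eq: "l1' = l1"
  proof -
    have "l1' = restrict_lab \<pi>1' (S'.glued_lab x' l1' l2')"
      unfolding S'.restrict_lab_glued_lab(1) by (rule OV_under_restrict_lab[OF P1'])
    also have "\<dots> = restrict_lab \<pi>1 (S.glued_lab x l1 l2)" using lab \<pi>1_eq by simp
    also have "\<dots> = l1" unfolding S.restrict_lab_glued_lab(1) by (rule OV_under_restrict_lab[OF P1, symmetric])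
    finally show ?thesis .
  qed
  have l2_eq: "l2' = l2"
  proof -
    have "l2' = restrict_lab \<pi>2' (S'.glued_lab x' l1' l2')"
      unfolding S'.restrict_lab_glued_lab(2) by (rule OV_under_restrict_lab[OF P2'])
    also have "\<dots> = restrict_lab \<pi>2 (S.glued_lab x l1 l2)" using lab \<pi>2_eq by simp
    also have "\<dots> = l2" unfolding S.restrict_lab_glued_lab(2) by (rule OV_under_restrict_lab[OF P2, symmetric])
    finally show ?thesis .
  qed
  have "L1' = L1"
    using OV_under_lab_image[OF P1] OV_under_lab_image[OF P1'] \<open>x \<in> L1\<close> \<open>x' \<in> L1'\<close>
    unfolding x_eq l1_eq \<pi>1_eq by blast
  then show ?thesis using m_eq x_eq \<pi>1_eq \<pi>2_eq l1_eq l2_eq by simp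
qed

lemma inj_on_glue: "inj_on (glue a) (glue_dom a n L t)"
  by (rule inj_onI) (simp only: split_paired_all, rule glue_eq_imp_eq)

lemma card_OV_under_Suc:
  fixes L :: "'a::{linorder,zero} set"
  assumes "t \<notin> L" "finite L"
  shows "card (OV_under a (n+1) L t) = (\<Sum>(m, L1, x)\<in>glue_index n L t.
    card (OV_under (a+1) m (L1 - {x}) x) * card (OV_under (a+2*m+2) (n-m) (L - L1) t))"
proof -
  have "glue a ` glue_dom a n L t = OV_under a (n+1) L t"
    using glue_mem_OV_under[OF _ assms(1)] OV_under_Suc_subset_glue by fastforce
  then have "card (OV_under a (n+1) L t) = card (glue_dom a n L t)"
    using card_image[OF inj_on_glue] by metis
  also have "\<dots> = (\<Sum>i\<in>glue_index n L t.
      card ((\<lambda>(m, L1, x). OV_under (a+1) m (L1 - {x}) x \<times> OV_under (a+2*m+2) (n-m) (L - L1) t) i))"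
    unfolding glue_dom_def
  proof (rule card_SigmaI)
    have "glue_index n L t \<subseteq> {0..n} \<times> Pow L \<times> L" by (auto simp: glue_index_def)
    then show "finite (glue_index n L t)" using assms(2) by (simp add: finite_subset)
    show "\<forall>i\<in>glue_index n L t.
        finite ((\<lambda>(m, L1, x). OV_under (a+1) m (L1 - {x}) x \<times> OV_under (a+2*m+2) (n-m) (L - L1) t) i)"
      using assms(2) by (auto simp: glue_index_def intro!: finite_OV_under dest: finite_subset)
  qed
  finally show ?thesis by (auto intro!: sum.cong simp: card_cartesian_product)
qed

section \<open>Regrouping the sum\<close>

lemma bij_betw_rank:
  fixes S :: "'a::linorder set"
  assumes "finite S"
  shows "bij_betw (\<lambda>x. card {y\<in>S. y < x}) S {0..<card S}"
proof -
  let ?r = "\<lambda>x. card {y\<in>S. y < x}"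
  have mono: "?r x < ?r x'" if "x \<in> S" "x' \<in> S" "x < x'" for x x'
  proof (rule psubset_card_mono)
    show "finite {y\<in>S. y < x'}" using assms by simp
    show "{y\<in>S. y < x} \<subset> {y\<in>S. y < x'}" using that by auto
  qed
  have inj: "inj_on ?r S"
  proof (rule inj_onI)
    fix x x' assume "x \<in> S" "x' \<in> S" "?r x = ?r x'"
    show "x = x'"
    proof (rule ccontr)
      assume "x \<noteq> x'"
      then have "x < x' \<or> x' < x" by auto
      then show False using mono \<open>x \<in> S\<close> \<open>x' \<in> S\<close> \<open>?r x = ?r x'\<close> by fastforce
    qed
  qed
  have sub: "?r ` S \<subseteq> {0..<card S}"
  proof
    fix i assume "i \<in> ?r ` S"
    then obtain x where x: "x \<in> S" "i = ?r x" by blast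
    have "{y\<in>S. y < x} \<subset> S" using x by auto
    then have "?r x < card S" using assms by (meson psubset_card_mono)
    then show "i \<in> {0..<card S}" using x by simp
  qed
  have "card (?r ` S) = card S" using card_image[OF inj] .
  then have "?r ` S = {0..<card S}" using sub by (intro card_subset_eq) auto
  then show ?thesis using inj unfolding bij_betw_def by simp
qed

lemma sum_rank:
  fixes A :: "'a::linorder set"
  assumes "finite A"
  shows "(\<Sum>x\<in>A. f (card {y\<in>A. y < x})) = (\<Sum>r<card A. f r)"
  using sum.reindex_bij_betw[OF bij_betw_rank[OF assms], of f] by (simp add: atLeast0LessThan)

text \<open>The admissible labels of the first block are those below \<open>t\<close>, whose ranks in \<open>L1\<close>
  run through \<open>0, \<dots>, j - 1\<close>, together with \<open>Min L1\<close> (of rank \<open>0\<close>) when \<open>j = 0\<close>.\<close>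
lemma sum_admissible_labels:
  fixes L1 :: "'a::linorder set"
  assumes fin: "finite L1" and ne: "L1 \<noteq> {}" and "t \<notin> L1"
  defines "j \<equiv> card {y\<in>L1. y < t}"
  shows "(\<Sum>x\<in>{x\<in>L1. t < x \<longrightarrow> (\<forall>y\<in>L1. x \<le> y)}. f (card {y\<in>L1 - {x}. y < x})) =
    (if j = 0 then f 0 else 0) + (\<Sum>r<j. f r)"
proof -
  let ?below = "{x\<in>L1. x < t}" and ?min = "{x\<in>L1. t < x \<and> (\<forall>y\<in>L1. x \<le> y)}"
  have split: "{x\<in>L1. t < x \<longrightarrow> (\<forall>y\<in>L1. x \<le> y)} = ?below \<union> ?min"
    using \<open>t \<notin> L1\<close> by (auto simp: not_less order.order_iff_strict)
  have "(\<Sum>x\<in>?below. f (card {y\<in>L1 - {x}. y < x})) = (\<Sum>x\<in>?below. f (card {y\<in>?below. y < x}))"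
    by (intro sum.cong refl arg_cong[where f = f] arg_cong[where f = card]) auto
  also have "\<dots> = (\<Sum>r<j. f r)" unfolding j_def by (rule sum_rank) (use fin in simp)
  finally have below: "(\<Sum>x\<in>?below. f (card {y\<in>L1 - {x}. y < x})) = (\<Sum>r<j. f r)" .
  have min: "(\<Sum>x\<in>?min. f (card {y\<in>L1 - {x}. y < x})) = (if j = 0 then f 0 else 0)"
  proof (cases "j = 0")
    case True
    then have "\<forall>y\<in>L1. t < y" using fin \<open>t \<notin> L1\<close> unfolding j_def by (force simp: not_less order.order_iff_strict)
    moreover have "Min L1 \<in> L1" using fin ne by simp
    ultimately have "?min = {Min L1}" using fin by (auto intro: Min_eqI[symmetric])
    then have "(\<Sum>x\<in>?min. f (card {y\<in>L1 - {x}. y < x})) = f (card {y\<in>L1 - {Min L1}. y < Min L1})"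
      by simp
    also have "{y\<in>L1 - {Min L1}. y < Min L1} = {}" using fin by (auto dest: Min_le leD)
    finally show ?thesis using True by simp
  next
    case False
    then obtain y where "y \<in> L1" "y < t" unfolding j_def by (metis (mono_tags, lifting) Collect_empty_eq card.empty)
    then have "?min = {}" by fastforce
    then have "(\<Sum>x\<in>?min. f (card {y\<in>L1 - {x}. y < x})) = 0" by (simp only: sum.empty)
    then show ?thesis using False by simp
  qed
  show ?thesis
    unfolding split using below min fin by (subst sum.union_disjoint) auto
qed

lemma card_subsets_meeting:
  fixes L A :: "'a set"
  assumes fL: "finite L" and AL: "A \<subseteq> L" and ls: "l \<le> s"
  shows "card {L1. L1 \<subseteq> L \<and> card L1 = s \<and> card (L1 \<inter> A) = l} = (card A choose l) * (card (L - A) choose (s - l))"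
proof -
  let ?W = "{L1. L1 \<subseteq> L \<and> card L1 = s \<and> card (L1 \<inter> A) = l}"
  let ?U = "{U. U \<subseteq> A \<and> card U = l}"
  let ?V = "{V. V \<subseteq> L - A \<and> card V = s - l}"
  have fA: "finite A" using fL AL finite_subset by blast
  have "bij_betw (\<lambda>L1. (L1 \<inter> A, L1 - A)) ?W (?U \<times> ?V)"
  proof (rule bij_betw_byWitness[where f'="\<lambda>(U,V). U \<union> V"])
    show "\<forall>L1\<in>?W. (\<lambda>(U,V). U \<union> V) (L1 \<inter> A, L1 - A) = L1" by auto
    show "\<forall>p\<in>?U \<times> ?V. (\<lambda>L1. (L1 \<inter> A, L1 - A)) ((\<lambda>(U,V). U \<union> V) p) = p" by auto
    show "(\<lambda>L1. (L1 \<inter> A, L1 - A)) ` ?W \<subseteq> ?U \<times> ?V"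
    proof
      fix p assume "p \<in> (\<lambda>L1. (L1 \<inter> A, L1 - A)) ` ?W"
      then obtain L1 where L1: "L1 \<subseteq> L" "card L1 = s" "card (L1 \<inter> A) = l" and p: "p = (L1 \<inter> A, L1 - A)" by blast
      have "finite L1" using L1 fL finite_subset by blast
      then have "card (L1 - A) = card L1 - card (L1 \<inter> A)" by (simp add: card_Diff_subset_Int)
      then show "p \<in> ?U \<times> ?V" using L1 p by auto
    qed
    show "(\<lambda>(U,V). U \<union> V) ` (?U \<times> ?V) \<subseteq> ?W"
    proof
      fix L1 assume "L1 \<in> (\<lambda>(U,V). U \<union> V) ` (?U \<times> ?V)"
      then obtain U V where U: "U \<subseteq> A" "card U = l" and V: "V \<subseteq> L - A" "card V = s - l" and L1: "L1 = U \<union> V" by blast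
      have fU: "finite U" using U fA finite_subset by blast
      have fV: "finite V" using V fL finite_subset by blast
      have "U \<inter> V = {}" using U V by blast
      then have "card L1 = l + (s - l)" using L1 U V fU fV by (simp add: card_Un_disjoint)
      moreover have "L1 \<inter> A = U" using L1 U V by blast
      ultimately show "L1 \<in> ?W" using L1 U V AL ls by auto
    qed
  qed
  then have "card ?W = card (?U \<times> ?V)" by (rule bij_betw_same_card)
  also have "\<dots> = (card A choose l) * (card (L - A) choose (s - l))"
    by (simp add: card_cartesian_product n_subsets fA fL)
  finally show ?thesis .
qed

lemma sum_subsets_by_meeting:
  fixes L A :: "'a set" and G :: "nat \<Rightarrow> nat"
  assumes fL: "finite L" and AL: "A \<subseteq> L"
  shows "(\<Sum>L1\<in>{L1. L1 \<subseteq> L \<and> card L1 = s}. G (card (L1 \<inter> A))) =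
     (\<Sum>l=0..s. (card A choose l) * (card (L - A) choose (s - l)) * G l)"
proof -
  let ?U = "{L1. L1 \<subseteq> L \<and> card L1 = s}"
  have "?U \<subseteq> Pow L" by auto
  then have fU: "finite ?U" using fL by (meson finite_Pow_iff finite_subset)
  have img: "(\<lambda>L1. card (L1 \<inter> A)) ` ?U \<subseteq> {0..s}"
  proof
    fix l assume "l \<in> (\<lambda>L1. card (L1 \<inter> A)) ` ?U"
    then obtain L1 where L1: "L1 \<subseteq> L" "card L1 = s" "l = card (L1 \<inter> A)" by blast
    have "finite L1" using L1 fL finite_subset by blast
    then have "card (L1 \<inter> A) \<le> card L1" by (intro card_mono) auto
    then show "l \<in> {0..s}" using L1 by simp
  qed
  have "(\<Sum>L1\<in>?U. G (card (L1 \<inter> A))) = (\<Sum>l\<in>{0..s}. \<Sum>L1\<in>{L1\<in>?U. card (L1 \<inter> A) = l}. G (card (L1 \<inter> A)))"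
    using sum.group[OF fU _ img, of "\<lambda>L1. G (card (L1 \<inter> A))"] by simp
  also have "\<dots> = (\<Sum>l\<in>{0..s}. card {L1\<in>?U. card (L1 \<inter> A) = l} * G l)"
  proof (rule sum.cong[OF refl])
    fix l assume "l \<in> {0..s}"
    have "(\<Sum>L1\<in>{L1\<in>?U. card (L1 \<inter> A) = l}. G (card (L1 \<inter> A))) = (\<Sum>L1\<in>{L1\<in>?U. card (L1 \<inter> A) = l}. G l)"
      by (rule sum.cong) auto
    then show "(\<Sum>L1\<in>{L1\<in>?U. card (L1 \<inter> A) = l}. G (card (L1 \<inter> A))) = card {L1\<in>?U. card (L1 \<inter> A) = l} * G l"
      by simp
  qed
  also have "\<dots> = (\<Sum>l=0..s. (card A choose l) * (card (L - A) choose (s - l)) * G l)"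
  proof (rule sum.cong[OF refl])
    fix l assume "l \<in> {0..s}"
    then have "card {L1\<in>?U. card (L1 \<inter> A) = l} = (card A choose l) * (card (L - A) choose (s - l))"
      using card_subsets_meeting[OF fL AL, of l s] by (simp add: conj_assoc)
    then show "card {L1\<in>?U. card (L1 \<inter> A) = l} * G l = (card A choose l) * (card (L - A) choose (s - l)) * G l"
      by simp
  qed
  finally show ?thesis .
qed

definition N_recursion_rhs :: "(nat \<Rightarrow> nat \<Rightarrow> nat) \<Rightarrow> nat \<Rightarrow> nat \<Rightarrow> nat" where
  "N_recursion_rhs M n k =
     (\<Sum>m = 0..n. \<Sum>l = max 0 (m + k - (n + 1)) .. min (k - 1) (m + 1).
        (k - 1 choose l) * ((n + 2 - k) choose (m + 1 - l)) *
        ((if l = 0 then M m 1 else 0) + (\<Sum>r = 1..l. M m r)) * M (n - m) (k - l))"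

lemma sum_glue_index:
  assumes "finite L"
  shows "(\<Sum>(m, L1, x)\<in>glue_index n L t. f m L1 x) =
    (\<Sum>m = 0..n. \<Sum>L1 | L1 \<subseteq> L \<and> card L1 = m+1. \<Sum>x | x \<in> L1 \<and> (t < x \<longrightarrow> (\<forall>y\<in>L1. x \<le> y)). f m L1 x)"
proof -
  let ?X = "\<lambda>L1. {x. x \<in> L1 \<and> (t < x \<longrightarrow> (\<forall>y\<in>L1. x \<le> y))}"
  have fin_L1: "finite {L1. L1 \<subseteq> L \<and> card L1 = m+1}" for m
    using finite_subset[of "{L1. L1 \<subseteq> L \<and> card L1 = m+1}" "Pow L"] assms by auto
  have fin_X: "\<forall>L1\<in>{L1. L1 \<subseteq> L \<and> card L1 = m+1}. finite (?X L1)" for m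
    using assms by (auto intro: finite_subset)
  have "(\<Sum>(m, L1, x)\<in>glue_index n L t. f m L1 x) =
      (\<Sum>m = 0..n. \<Sum>(L1, x)\<in>(SIGMA L1:{L1. L1 \<subseteq> L \<and> card L1 = m+1}. ?X L1). f m L1 x)"
    unfolding glue_index_def
    by (rule sum.Sigma[symmetric]) (use fin_L1 fin_X in \<open>auto intro!: finite_SigmaI\<close>)
  also have "\<dots> = (\<Sum>m = 0..n. \<Sum>L1 | L1 \<subseteq> L \<and> card L1 = m+1. \<Sum>x\<in>?X L1. f m L1 x)"
    by (intro sum.cong refl sum.Sigma[symmetric] fin_L1 fin_X)
  finally show ?thesis .
qed

lemma sum_admissible_product:
  fixes L :: "'a::linorder set" and F H :: "nat \<Rightarrow> nat"
  assumes fin: "finite L" and "t \<notin> L" and L1: "L1 \<subseteq> L" "L1 \<noteq> {}"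
  defines "A \<equiv> {y\<in>L. y < t}"
  shows "(\<Sum>x | x \<in> L1 \<and> (t < x \<longrightarrow> (\<forall>y\<in>L1. x \<le> y)).
       F (card {y\<in>L1 - {x}. y < x} + 1) * H (card {y\<in>L - L1. y < t} + 1)) =
     ((if card (L1 \<inter> A) = 0 then F 1 else 0) + (\<Sum>r = 1..card (L1 \<inter> A). F r)) *
       H (card A - card (L1 \<inter> A) + 1)"
proof -
  have fin1: "finite L1" using L1 fin by (auto intro: finite_subset)
  have "t \<notin> L1" using L1 \<open>t \<notin> L\<close> by auto
  have below: "{y\<in>L1. y < t} = L1 \<inter> A" unfolding A_def using L1 by auto
  have "{y\<in>L - L1. y < t} = A - L1 \<inter> A" unfolding A_def by auto
  then have right: "card {y\<in>L - L1. y < t} = card A - card (L1 \<inter> A)"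
    using fin unfolding A_def by (simp add: card_Diff_subset)
  have "(\<Sum>x | x \<in> L1 \<and> (t < x \<longrightarrow> (\<forall>y\<in>L1. x \<le> y)).
       F (card {y\<in>L1 - {x}. y < x} + 1) * H (card {y\<in>L - L1. y < t} + 1)) =
     (\<Sum>x | x \<in> L1 \<and> (t < x \<longrightarrow> (\<forall>y\<in>L1. x \<le> y)). F (card {y\<in>L1 - {x}. y < x} + 1)) *
       H (card {y\<in>L - L1. y < t} + 1)"
    by (simp only: sum_distrib_right)
  also have "(\<Sum>x | x \<in> L1 \<and> (t < x \<longrightarrow> (\<forall>y\<in>L1. x \<le> y)). F (card {y\<in>L1 - {x}. y < x} + 1)) =
      (if card (L1 \<inter> A) = 0 then F 1 else 0) + (\<Sum>r = 1..card (L1 \<inter> A). F r)"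
    using sum_admissible_labels[OF fin1 L1(2) \<open>t \<notin> L1\<close>, of "\<lambda>r. F (r + 1)"]
    unfolding below by (simp add: sum.atLeast1_atMost_eq)
  finally show ?thesis unfolding right .
qed

lemma sum_first_labels_regroup:
  fixes L :: "'a::linorder set" and M :: "nat \<Rightarrow> nat \<Rightarrow> nat"
  assumes fin: "finite L" and card_L: "card L = n+1" and "t \<notin> L" and k: "k = card {y\<in>L. y < t} + 1"
  shows "(\<Sum>L1 | L1 \<subseteq> L \<and> card L1 = m+1. \<Sum>x | x \<in> L1 \<and> (t < x \<longrightarrow> (\<forall>y\<in>L1. x \<le> y)).
       M m (card {y\<in>L1 - {x}. y < x} + 1) * M (n-m) (card {y\<in>L - L1. y < t} + 1)) =
     (\<Sum>l = max 0 (m + k - (n + 1)) .. min (k - 1) (m + 1).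
        (k - 1 choose l) * ((n + 2 - k) choose (m + 1 - l)) *
        ((if l = 0 then M m 1 else 0) + (\<Sum>r = 1..l. M m r)) * M (n - m) (k - l))"
proof -
  define A where "A = {y\<in>L. y < t}"
  define j where "j = card A"
  define G where "G l = ((if l = 0 then M m 1 else 0) + (\<Sum>r = 1..l. M m r)) * M (n-m) (j - l + 1)" for l
  have "A \<subseteq> L" unfolding A_def by auto
  then have j_le: "j \<le> n+1" and card_rest: "card (L - A) = n + 1 - j"
    unfolding j_def using card_mono[OF fin] card_Diff_subset[OF finite_subset[OF _ fin]] card_L by auto
  have k_eq: "k = j + 1" unfolding j_def A_def using k by simp
  have "(\<Sum>L1 | L1 \<subseteq> L \<and> card L1 = m+1. \<Sum>x | x \<in> L1 \<and> (t < x \<longrightarrow> (\<forall>y\<in>L1. x \<le> y)).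
       M m (card {y\<in>L1 - {x}. y < x} + 1) * M (n-m) (card {y\<in>L - L1. y < t} + 1)) =
     (\<Sum>L1 | L1 \<subseteq> L \<and> card L1 = m+1. G (card (L1 \<inter> A)))"
    unfolding G_def j_def A_def
    by (intro sum.cong refl sum_admissible_product[OF fin \<open>t \<notin> L\<close>]) auto
  also have "\<dots> = (\<Sum>l = 0..m+1. (j choose l) * ((n + 1 - j) choose (m + 1 - l)) * G l)"
    using sum_subsets_by_meeting[OF fin \<open>A \<subseteq> L\<close>, where s = "m+1" and G = G] unfolding j_def[symmetric] card_rest .
  also have "\<dots> = (\<Sum>l = max 0 (m + k - (n + 1)) .. min (k - 1) (m + 1).
        (k - 1 choose l) * ((n + 2 - k) choose (m + 1 - l)) *
        ((if l = 0 then M m 1 else 0) + (\<Sum>r = 1..l. M m r)) * M (n - m) (k - l))"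
  proof (rule sum.mono_neutral_cong_right)
    \<comment> \<open>outside the range one of the binomial coefficients vanishes\<close>
    show "\<forall>l\<in>{0..m+1} - {max 0 (m + k - (n + 1)) .. min (k - 1) (m + 1)}.
        (j choose l) * ((n + 1 - j) choose (m + 1 - l)) * G l = 0"
      using k_eq j_le by auto
    show "(j choose l) * ((n + 1 - j) choose (m + 1 - l)) * G l =
        (k - 1 choose l) * ((n + 2 - k) choose (m + 1 - l)) *
        ((if l = 0 then M m 1 else 0) + (\<Sum>r = 1..l. M m r)) * M (n - m) (k - l)"
      if "l \<in> {max 0 (m + k - (n + 1)) .. min (k - 1) (m + 1)}" for l
      using that k_eq unfolding G_def by (simp add: Suc_diff_le mult.assoc)
  qed auto
  finally show ?thesis .
qed

lemma glue_index_sum_eq_N_recursion_rhs: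
  fixes L :: "'a::linorder set" and M :: "nat \<Rightarrow> nat \<Rightarrow> nat"
  assumes "finite L" "card L = n+1" "t \<notin> L" "k = card {y\<in>L. y < t} + 1"
  shows "(\<Sum>(m, L1, x)\<in>glue_index n L t.
      M m (card {y\<in>L1 - {x}. y < x} + 1) * M (n-m) (card {y\<in>L - L1. y < t} + 1)) = N_recursion_rhs M n k"
  unfolding sum_glue_index[OF assms(1)] N_recursion_rhs_def
  by (intro sum.cong refl sum_first_labels_regroup[OF assms])

section \<open>The recursion\<close>

lemma card_OV_under_0: "card (OV_under a 0 {} t) = 1"
proof -
  have "OV_under a 0 {} t = {({}, \<lambda>_. 0)}"
  proof (intro equalityI subsetI)
    fix z assume "z \<in> OV_under a 0 {} t"
    then obtain \<pi> lab where z: "z = (\<pi>, lab)" and nc: "nc_pair_partition \<pi> {a+1..a+2*0}"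
      and zero: "\<forall>B. B \<notin> \<pi> \<longrightarrow> lab B = 0"
      unfolding OV_under_def by auto
    have "\<pi> = {}" using nc_pair_partition_block[OF nc] by fastforce
    then show "z \<in> {({}, \<lambda>_. 0)}" using z zero by auto
  next
    fix z :: "nat set set \<times> (nat set \<Rightarrow> 'a)"
    assume "z \<in> {({}, \<lambda>_. 0)}"
    moreover have "nc_pair_partition {} {a+1..a+2*0}"
      unfolding nc_pair_partition_def pair_partition_def noncrossing_def by simp
    ultimately show "z \<in> OV_under a 0 {} t"
      unfolding OV_under_def V_local_under_def V_local_def by (simp add: bij_betw_def)
  qed
  then show ?thesis by simp
qed

lemma card_OV_under_Suc_eq_rhs:
  fixes L :: "'a::{linorder,zero} set" and M :: "nat \<Rightarrow> nat \<Rightarrow> nat"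
  assumes L: "finite L" "card L = n+1" "t \<notin> L"
    and IH: "\<And>m a L t. m \<le> n \<Longrightarrow> finite L \<Longrightarrow> card L = m \<Longrightarrow> t \<notin> L \<Longrightarrow>
      card (OV_under a m L (t :: 'a)) = M m (card {y\<in>L. y < t} + 1)"
  shows "card (OV_under a (n+1) L t) = N_recursion_rhs M n (card {y\<in>L. y < t} + 1)"
proof -
  have "card (OV_under a (n+1) L t) = (\<Sum>(m, L1, x)\<in>glue_index n L t.
      card (OV_under (a+1) m (L1 - {x}) x) * card (OV_under (a+2*m+2) (n-m) (L - L1) t))"
    using card_OV_under_Suc L(1,3) by blast
  also have "\<dots> = (\<Sum>(m, L1, x)\<in>glue_index n L t.
      M m (card {y\<in>L1 - {x}. y < x} + 1) * M (n-m) (card {y\<in>L - L1. y < t} + 1))"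
  proof (intro sum.cong refl, clarify)
    fix m L1 x assume "(m, L1, x) \<in> glue_index n L t"
    then have "m \<le> n" "L1 \<subseteq> L" "card L1 = m+1" "x \<in> L1" unfolding glue_index_def by auto
    moreover have "finite L1" using \<open>L1 \<subseteq> L\<close> L(1) by (rule finite_subset)
    ultimately have "card (OV_under (a+1) m (L1 - {x}) x) = M m (card {y\<in>L1 - {x}. y < x} + 1)"
      and "card (OV_under (a+2*m+2) (n-m) (L - L1) t) = M (n-m) (card {y\<in>L - L1. y < t} + 1)"
      using IH[where m = m and a = "a+1" and L = "L1 - {x}" and t = x]
        IH[where m = "n-m" and a = "a+2*m+2" and L = "L - L1" and t = t] L
      by (simp_all add: card_Diff_subset)
    then show "card (OV_under (a+1) m (L1 - {x}) x) * card (OV_under (a+2*m+2) (n-m) (L - L1) t) =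
        M m (card {y\<in>L1 - {x}. y < x} + 1) * M (n-m) (card {y\<in>L - L1. y < t} + 1)"
      by simp
  qed
  also have "\<dots> = N_recursion_rhs M n (card {y\<in>L. y < t} + 1)"
    by (rule glue_index_sum_eq_N_recursion_rhs[OF L refl])
  finally show ?thesis .
qed

lemma half_integer_label_rank:
  assumes "1 \<le> k" "k \<le> n + 1"
  shows "card (of_nat ` {1..n} :: rat set) = n"
    and "(of_nat k - 1/2 :: rat) \<notin> of_nat ` {1..n}"
    and "card {y \<in> of_nat ` {1..n}. y < (of_nat k - 1/2 :: rat)} = k - 1"
proof -
  show "card (of_nat ` {1..n} :: rat set) = n" by (simp add: card_image inj_on_def)
  show "(of_nat k - 1/2 :: rat) \<notin> of_nat ` {1..n}"
  proof
    assume "(of_nat k - 1/2 :: rat) \<in> of_nat ` {1..n}"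
    then obtain i where "(of_nat i :: rat) = of_nat k - 1/2" by auto
    then have "(of_nat (2*i+1) :: rat) = of_nat (2*k)" by (simp add: field_simps)
    then have "2*i+1 = 2*k" by (simp only: of_nat_eq_iff)
    then show False by presburger
  qed
  have "{y \<in> of_nat ` {1..n}. y < (of_nat k - 1/2 :: rat)} = of_nat ` {1..k-1}"
  proof (intro equalityI subsetI)
    fix y assume "y \<in> {y \<in> of_nat ` {1..n}. y < (of_nat k - 1/2 :: rat)}"
    then obtain i where i: "i \<in> {1..n}" "y = of_nat i" "(of_nat i :: rat) < of_nat k - 1/2" by auto
    then have "(of_nat i :: rat) < of_nat k" by simp
    then have "i < k" by (simp only: of_nat_less_iff)
    then show "y \<in> of_nat ` {1..k-1}" using i by auto
  next
    fix y assume "y \<in> (of_nat ` {1..k-1} :: rat set)"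
    then obtain i where i: "i \<in> {1..k-1}" "y = of_nat i" by auto
    then have "i + 1 \<le> k" by auto
    then have "(of_nat i + 1 :: rat) \<le> of_nat k" by (metis of_nat_1 of_nat_add of_nat_le_iff)
    then show "y \<in> {y \<in> of_nat ` {1..n}. y < (of_nat k - 1/2 :: rat)}" using i assms by auto
  qed
  then show "card {y \<in> of_nat ` {1..n}. y < (of_nat k - 1/2 :: rat)} = k - 1"
    by (simp add: card_image inj_on_def)
qed

lemma N_Suc_eq_rhs:
  assumes "1 \<le> k" "k \<le> n + 2"
    and IH: "\<And>m a L t. m \<le> n \<Longrightarrow> finite L \<Longrightarrow> card L = m \<Longrightarrow> t \<notin> L \<Longrightarrow>
      card (OV_under a m L (t :: rat)) = N m (card {y\<in>L. y < t} + 1)"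
  shows "N (n+1) k = N_recursion_rhs N n k"
proof -
  have "k \<le> (n+1) + 1" using assms(2) by simp
  note rank = half_integer_label_rank[OF assms(1) this]
  have "N (n+1) k = card (OV_under 0 (n+1) (of_nat ` {1..n+1}) (of_nat k - 1/2 :: rat))"
    by (rule N_eq_card_OV_under)
  also have "\<dots> = N_recursion_rhs N n (card {y \<in> of_nat ` {1..n+1}. y < (of_nat k - 1/2 :: rat)} + 1)"
    by (rule card_OV_under_Suc_eq_rhs[OF _ rank(1,2) IH]) simp_all
  also have "card {y \<in> of_nat ` {1..n+1}. y < (of_nat k - 1/2 :: rat)} + 1 = k"
    using rank(3) assms(1) by simp
  finally show ?thesis .
qed

lemma card_OV_under_eq_N:
  fixes L :: "rat set"
  shows "finite L \<Longrightarrow> card L = n \<Longrightarrow> t \<notin> L \<Longrightarrow> card (OV_under a n L t) = N n (card {y\<in>L. y < t} + 1)"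
proof (induction n arbitrary: a L t rule: less_induct)
  case (less n)
  show ?case
  proof (cases n)
    case 0
    then have "L = {}" using less.prems by simp
    moreover have "N 0 1 = 1" using N_eq_card_OV_under[of 0 1] by (simp add: card_OV_under_0)
    ultimately show ?thesis using 0 by (simp add: card_OV_under_0)
  next
    case (Suc n')
    have IH: "\<And>m a L t. m \<le> n' \<Longrightarrow> finite L \<Longrightarrow> card L = m \<Longrightarrow> t \<notin> L \<Longrightarrow>
        card (OV_under a m L (t :: rat)) = N m (card {y\<in>L. y < t} + 1)"
      using less.IH Suc by simp
    define k where "k = card {y\<in>L. y < t} + 1"
    have "k \<le> n' + 2"
      using card_mono[OF less.prems(1), of "{y\<in>L. y < t}"] less.prems(2) Suc unfolding k_def by simp
    have "card (OV_under a (n'+1) L t) = N_recursion_rhs N n' k"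
      unfolding k_def
      by (rule card_OV_under_Suc_eq_rhs[OF less.prems(1) _ less.prems(3) IH]) (use less.prems(2) Suc in simp_all)
    also have "\<dots> = N (n'+1) k"
      by (rule N_Suc_eq_rhs[symmetric]) (use \<open>k \<le> n' + 2\<close> IH in \<open>simp_all add: k_def\<close>)
    finally show ?thesis using Suc unfolding k_def by simp
  qed
qed

theorem mainTheorem2:
  shows "(\<forall>n k. 1 \<le> k \<and> k \<le> n + 2 \<longrightarrow>
           N (n+1) k =
             (\<Sum>m = 0..n. \<Sum>l = max 0 (m + k - (n + 1)) .. min (k - 1) (m + 1).
                (k - 1 choose l) * ((n + 2 - k) choose (m + 1 - l)) *
                ((if l = 0 then N m 1 else 0) + (\<Sum>r = 1..l. N m r)) *
                N (n - m) (k - l)))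
         \<and> (\<forall>n. N n (n + 1) = card (OV2 n))"
proof (intro conjI allI impI)
  fix n k :: nat
  assume "1 \<le> k \<and> k \<le> n + 2"
  then have "N (n+1) k = N_recursion_rhs N n k"
    using N_Suc_eq_rhs card_OV_under_eq_N by blast
  then show "N (n+1) k =
             (\<Sum>m = 0..n. \<Sum>l = max 0 (m + k - (n + 1)) .. min (k - 1) (m + 1).
                (k - 1 choose l) * ((n + 2 - k) choose (m + 1 - l)) *
                ((if l = 0 then N m 1 else 0) + (\<Sum>r = 1..l. N m r)) *
                N (n - m) (k - l))"
    unfolding N_recursion_rhs_def .
next
  show "N n (n + 1) = card (OV2 n)" for n by (rule N_last_eq_card_OV2)
qed

end
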